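(* Consider the discrete-time system $x_{k+1}=A_kx_k+b_ku_k$, $y_k=c_kx_k$ ($k\in\mathbb{Z}$) with $A_k\in\mathbb{R}^{n\times n}$, $b_k\in\mathbb{R}^{n\times1}$, $c_k\in\mathbb{R}^{1\times n}$. If the system is completely controllable, completely observable and $c_k\operatorname{adj}(A_k)b_k\neq0$ for every $k\in\mathbb{Z}$, then there exists a linear time-varying output-feedback controller of the form $u_k=F_ky_k$ (with scalars $F_k$) that steers any initial state at any time to the origin in $2(n^4+n^3+n^2)$ steps.
   Context: Complete controllability: for every $k\in\mathbb{Z}$ and every $\xi_s,\xi_f\in\mathbb{R}^n$ there are controls $u_k,\dots,u_{k+n-1}$ with $x_k=\xi_s\Rightarrow x_{k+n}=\xi_f$. Complete observability: for every $k\in\mathbb{Z}$ and all controls $u_k,\dots,u_{k+n-2}$, $x_k$ is uniquely determined by $y_k,\dots,y_{k+n-1}$. $\operatorname{adj}(A)$ is the adjugate of $A$ (so $A\operatorname{adj}(A)=\det(A)I$). Under $u_k=F_ky_k$ the closed-loop dynamics are $x_{k+1}=(A_k+F_kb_kc_k)x_k$. *)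

theory Defs
  imports "Jordan_Normal_Form.Determinant"
begin

text \<open>Matrices are Jordan_Normal_Form matrices; the state dimension is n.
  A k is n x n, b k is n x 1, c k is 1 x n; time k ranges over int.\<close>

fun traj :: "(int \<Rightarrow> real mat) \<Rightarrow> (int \<Rightarrow> real mat) \<Rightarrow> (int \<Rightarrow> real)
              \<Rightarrow> int \<Rightarrow> real vec \<Rightarrow> nat \<Rightarrow> real vec" where
  "traj A b u k xi 0 = xi"
| "traj A b u k xi (Suc m) =
     A (k + int m) *\<^sub>v traj A b u k xi m + u (k + int m) \<cdot>\<^sub>v col (b (k + int m)) 0"

definition sys_output :: "(int \<Rightarrow> real mat) \<Rightarrow> int \<Rightarrow> real vec \<Rightarrow> real" where
  "sys_output c j x = (c j *\<^sub>v x) $ 0"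

definition completely_controllable ::
  "nat \<Rightarrow> (int \<Rightarrow> real mat) \<Rightarrow> (int \<Rightarrow> real mat) \<Rightarrow> bool" where
  "completely_controllable n A b \<longleftrightarrow>
     (\<forall>k. \<forall>xs \<in> carrier_vec n. \<forall>xf \<in> carrier_vec n.
        \<exists>u. traj A b u k xs n = xf)"

definition completely_observable ::
  "nat \<Rightarrow> (int \<Rightarrow> real mat) \<Rightarrow> (int \<Rightarrow> real mat) \<Rightarrow> (int \<Rightarrow> real mat) \<Rightarrow> bool" where
  "completely_observable n A b c \<longleftrightarrow>
     (\<forall>k u. \<forall>x1 \<in> carrier_vec n. \<forall>x2 \<in> carrier_vec n.
        (\<forall>i<n. sys_output c (k + int i) (traj A b u k x1 i)
               = sys_output c (k + int i) (traj A b u k x2 i)) \<longrightarrow> x1 = x2)"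

text \<open>Closed-loop trajectory under u_j = F_j y_j: x_{j+1} = (A_j + F_j b_j c_j) x_j.\<close>
fun cl_traj :: "(int \<Rightarrow> real mat) \<Rightarrow> (int \<Rightarrow> real mat) \<Rightarrow> (int \<Rightarrow> real mat)
              \<Rightarrow> (int \<Rightarrow> real) \<Rightarrow> int \<Rightarrow> real vec \<Rightarrow> nat \<Rightarrow> real vec" where
  "cl_traj A b c F k xi 0 = xi"
| "cl_traj A b c F k xi (Suc m) =
     (A (k + int m) + F (k + int m) \<cdot>\<^sub>m (b (k + int m) * c (k + int m)))
        *\<^sub>v cl_traj A b c F k xi m"

end

theory Submission
  imports Defs
begin

text \<open>Fix a start time \<open>\<tau>\<close> and a state \<open>z\<close>. Call a time free if some input supported on the
  earlier free times makes the output there non-zero, and call an input admissible if it vanishes at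
  all other times. Admissible inputs give output zero at all times that are not free, so an
  admissible input with non-zero outputs at all free times is realised by the output feedback
  \<open>F = u / y\<close>.

  Let \<open>L(m)\<close> be the span of the contributions at time \<open>\<tau> + m\<close> of inputs at free times, and \<open>V(m)\<close>
  the span of \<open>L(m)\<close> and the free response. Controllability bounds \<open>dim L(l + n)\<close> from below, and
  observability bounds \<open>dim V(l)\<close> from above, by the number of free times in \<open>[l, l + n)\<close>. As
  \<open>dim L(m) \<le> dim V(m) \<le> n\<close> and, thanks to \<open>c adj(A) b \<noteq> 0\<close>, \<open>dim L(m)\<close> never decreases, some
  window \<open>[S, S + n)\<close> with \<open>S \<le> 2 n\<^sup>2\<close> has \<open>dim L(S) = dim V(S) = dim L(S + n)\<close>. Then every
  admissible input prefix can be completed to reach \<open>0\<close> at \<open>S + n\<close>, and at a free time of the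
  window the state can be steered to \<open>adj(A) b\<close>, whose output \<open>c adj(A) b\<close> is non-zero, and then
  to \<open>0\<close>. The admissible inputs reaching \<open>0\<close> at \<open>S + n\<close> form an affine set on which no output at
  a free time vanishes identically, so a generic one has all these outputs non-zero.

  Thus every single state is steered to \<open>0\<close> within \<open>2 n\<^sup>2 + n\<close> steps. By linearity the unit
  vectors are then steered to \<open>0\<close> one after the other, and gluing such feedbacks along blocks of
  time handles all start times.\<close>

section \<open>Linear algebra\<close>

text \<open>Families are indexed by \<open>nat\<close> and may repeat vectors, because the rank arguments below
  replace single members of a family.\<close>

definition lin_comb :: "nat \<Rightarrow> (nat \<Rightarrow> real vec) \<Rightarrow> (nat \<Rightarrow> real) \<Rightarrow> nat set \<Rightarrow> real vec" where
  "lin_comb n f c I = vec n (\<lambda>r. \<Sum>i\<in>I. c i * f i $ r)"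

definition lin_span :: "nat \<Rightarrow> (nat \<Rightarrow> real vec) \<Rightarrow> nat set \<Rightarrow> real vec set" where
  "lin_span n f I = {lin_comb n f c I | c. True}"

definition lin_indep :: "nat \<Rightarrow> (nat \<Rightarrow> real vec) \<Rightarrow> nat set \<Rightarrow> bool" where
  "lin_indep n f I \<longleftrightarrow> finite I \<and> f ` I \<subseteq> carrier_vec n \<and>
     (\<forall>c. lin_comb n f c I = 0\<^sub>v n \<longrightarrow> (\<forall>i\<in>I. c i = 0))"

definition lin_subspace :: "nat \<Rightarrow> real vec set \<Rightarrow> bool" where
  "lin_subspace n W \<longleftrightarrow> W \<subseteq> carrier_vec n \<and> 0\<^sub>v n \<in> W \<and>
     (\<forall>x\<in>W. \<forall>y\<in>W. x + y \<in> W) \<and> (\<forall>a. \<forall>x\<in>W. a \<cdot>\<^sub>v x \<in> W)"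

definition span_dim :: "nat \<Rightarrow> real vec set \<Rightarrow> nat" where
  "span_dim n W = Max {card I | I. \<exists>f. lin_indep n f I \<and> f ` I \<subseteq> W}"

definition linear_functional :: "nat \<Rightarrow> (real vec \<Rightarrow> real) \<Rightarrow> bool" where
  "linear_functional n g \<longleftrightarrow>
     (\<forall>x\<in>carrier_vec n. \<forall>y\<in>carrier_vec n. g (x + y) = g x + g y) \<and>
     (\<forall>a. \<forall>x\<in>carrier_vec n. g (a \<cdot>\<^sub>v x) = a * g x)"

lemma lin_comb_carrier [simp]: "lin_comb n f c I \<in> carrier_vec n"
  by (simp add: lin_comb_def)

lemma dim_lin_comb [simp]: "dim_vec (lin_comb n f c I) = n"
  by (simp add: lin_comb_def)

lemma index_lin_comb [simp]: "r < n \<Longrightarrow> lin_comb n f c I $ r = (\<Sum>i\<in>I. c i * f i $ r)"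
  by (simp add: lin_comb_def)

lemma lin_comb_cong:
  "(\<And>i. i \<in> I \<Longrightarrow> c i = d i) \<Longrightarrow> (\<And>i r. i \<in> I \<Longrightarrow> r < n \<Longrightarrow> f i $ r = g i $ r) \<Longrightarrow>
   lin_comb n f c I = lin_comb n g d I"
  by (intro eq_vecI) (auto intro!: sum.cong)

lemma lin_comb_add_coeffs: "lin_comb n f (\<lambda>i. c i + d i) I = lin_comb n f c I + lin_comb n f d I"
  by (intro eq_vecI) (auto simp: sum.distrib algebra_simps)

lemma lin_comb_diff_coeffs: "lin_comb n f (\<lambda>i. c i - d i) I = lin_comb n f c I - lin_comb n f d I"
  by (intro eq_vecI) (auto simp: sum_subtractf algebra_simps)

lemma lin_comb_smult_coeffs: "lin_comb n f (\<lambda>i. a * c i) I = a \<cdot>\<^sub>v lin_comb n f c I"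
  by (intro eq_vecI) (auto simp: sum_distrib_left algebra_simps)

lemma lin_comb_insert:
  "finite I \<Longrightarrow> k \<notin> I \<Longrightarrow> f k \<in> carrier_vec n \<Longrightarrow>
   lin_comb n f c (insert k I) = c k \<cdot>\<^sub>v f k + lin_comb n f c I"
  by (intro eq_vecI) auto

lemma lin_comb_union:
  "finite I \<Longrightarrow> finite J \<Longrightarrow> I \<inter> J = {} \<Longrightarrow>
   lin_comb n f c (I \<union> J) = lin_comb n f c I + lin_comb n f c J"
  by (intro eq_vecI) (auto simp: sum.union_disjoint)

lemma lin_comb_mono_neutral:
  "finite J \<Longrightarrow> I \<subseteq> J \<Longrightarrow> (\<And>i. i \<in> J - I \<Longrightarrow> c i = 0) \<Longrightarrow> lin_comb n f c J = lin_comb n f c I"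
  by (intro eq_vecI) (auto intro!: sum.mono_neutral_right)

lemma lin_comb_single:
  assumes "finite I" and "k \<in> I" and "f k \<in> carrier_vec n"
  shows "lin_comb n f (\<lambda>i. if i = k then a else 0) I = a \<cdot>\<^sub>v f k"
proof (intro eq_vecI)
  fix r assume "r < dim_vec (a \<cdot>\<^sub>v f k)"
  then have r: "r < n" using assms(3) by simp
  have "(\<Sum>i\<in>I. (if i = k then a else 0) * f i $ r) = (\<Sum>i\<in>I. if i = k then a * f k $ r else 0)"
    by (rule sum.cong) auto
  then show "lin_comb n f (\<lambda>i. if i = k then a else 0) I $ r = (a \<cdot>\<^sub>v f k) $ r"
    using r assms by simp
qed (use assms(3) in auto)

lemma lin_comb_mult:
  assumes A: "A \<in> carrier_mat m n" and f: "f ` I \<subseteq> carrier_vec n"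
  shows "A *\<^sub>v lin_comb n f c I = lin_comb m (\<lambda>i. A *\<^sub>v f i) c I"
proof (intro eq_vecI)
  fix r assume "r < dim_vec (lin_comb m (\<lambda>i. A *\<^sub>v f i) c I)"
  then have r: "r < m" by simp
  have fd: "\<And>i. i \<in> I \<Longrightarrow> dim_vec (f i) = n" using f by auto
  have "(A *\<^sub>v lin_comb n f c I) $ r = (\<Sum>k<n. A $$ (r,k) * (\<Sum>i\<in>I. c i * f i $ k))"
    using A r by (simp add: scalar_prod_def lessThan_atLeast0)
  also have "\<dots> = (\<Sum>k<n. \<Sum>i\<in>I. A $$ (r,k) * (c i * f i $ k))"
    by (simp add: sum_distrib_left)
  also have "\<dots> = (\<Sum>i\<in>I. \<Sum>k<n. A $$ (r,k) * (c i * f i $ k))"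
    by (rule sum.swap)
  also have "\<dots> = lin_comb m (\<lambda>i. A *\<^sub>v f i) c I $ r"
    using A r fd by (auto intro!: sum.cong simp: scalar_prod_def sum_distrib_left
        lessThan_atLeast0 algebra_simps)
  finally show "(A *\<^sub>v lin_comb n f c I) $ r = lin_comb m (\<lambda>i. A *\<^sub>v f i) c I $ r" .
qed (use A in auto)

lemma linear_functional_scalar_prod: "v \<in> carrier_vec n \<Longrightarrow> linear_functional n (\<lambda>x. v \<bullet> x)"
  by (simp add: linear_functional_def scalar_prod_add_distrib[of _ n] scalar_prod_smult_distrib[of _ n])

lemma linear_functional_lin_comb:
  assumes g: "linear_functional n g" and "finite I" and "f ` I \<subseteq> carrier_vec n"
  shows "g (lin_comb n f c I) = (\<Sum>i\<in>I. c i * g (f i))"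
  using assms(2,3)
proof (induction I rule: finite_induct)
  case empty
  have "g (0 \<cdot>\<^sub>v 0\<^sub>v n) = 0" using g by (simp add: linear_functional_def)
  moreover have "lin_comb n f c {} = 0 \<cdot>\<^sub>v 0\<^sub>v n" by (intro eq_vecI) auto
  ultimately show ?case by simp
next
  case (insert k I)
  then show ?case using g by (simp add: lin_comb_insert linear_functional_def)
qed

lemma lin_spanI: "v = lin_comb n f c I \<Longrightarrow> v \<in> lin_span n f I"
  by (auto simp: lin_span_def)

lemma lin_spanE: "v \<in> lin_span n f I \<Longrightarrow> (\<And>c. v = lin_comb n f c I \<Longrightarrow> P) \<Longrightarrow> P"
  by (auto simp: lin_span_def)

lemma lin_span_gen: "finite I \<Longrightarrow> k \<in> I \<Longrightarrow> f k \<in> carrier_vec n \<Longrightarrow> f k \<in> lin_span n f I"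
  using lin_comb_single[of I k f n 1]
    by (intro lin_spanI[where c = "\<lambda>i. if i = k then 1 else 0"]) auto

lemma lin_span_mono: "finite J \<Longrightarrow> I \<subseteq> J \<Longrightarrow> lin_span n f I \<subseteq> lin_span n f J"
proof
  fix v assume J: "finite J" and IJ: "I \<subseteq> J" and "v \<in> lin_span n f I"
  then obtain c where v: "v = lin_comb n f c I" by (auto elim: lin_spanE)
  let ?c = "\<lambda>i. if i \<in> I then c i else 0"
  have "lin_comb n f ?c J = lin_comb n f ?c I" by (rule lin_comb_mono_neutral[OF J IJ]) auto
  also have "\<dots> = v" unfolding v by (rule lin_comb_cong) auto
  finally show "v \<in> lin_span n f J" by (metis lin_spanI)
qed

lemma lin_subspace_carrier: "lin_subspace n W \<Longrightarrow> x \<in> W \<Longrightarrow> x \<in> carrier_vec n"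
  by (auto simp: lin_subspace_def)

lemma lin_subspace_diff:
  assumes W: "lin_subspace n W" and "x \<in> W" "y \<in> W" shows "x - y \<in> W"
proof -
  have "x + (- 1) \<cdot>\<^sub>v y \<in> W" using assms by (simp add: lin_subspace_def)
  moreover have "x + (- 1) \<cdot>\<^sub>v y = x - y" using assms
    by (intro eq_vecI) (auto simp: lin_subspace_def)
  ultimately show ?thesis by simp
qed

lemma lin_subspace_lin_comb:
  assumes W: "lin_subspace n W" and "finite I" and "f ` I \<subseteq> W"
  shows "lin_comb n f c I \<in> W"
  using assms(2,3)
proof (induction I rule: finite_induct)
  case empty
  have "lin_comb n f c {} = 0\<^sub>v n" by (intro eq_vecI) auto
  then show ?case using W by (simp add: lin_subspace_def)
next
  case (insert k I)
  then have "f k \<in> carrier_vec n" using W by (auto simp: lin_subspace_def)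
  then show ?case using insert W by (simp add: lin_comb_insert lin_subspace_def)
qed

lemma lin_subspace_lin_span: "lin_subspace n (lin_span n f I)"
  unfolding lin_subspace_def
proof (intro conjI ballI allI subsetI)
  show "0\<^sub>v n \<in> lin_span n f I" by (intro lin_spanI[of _ _ _ "\<lambda>_. 0"] eq_vecI) auto
  show "x + y \<in> lin_span n f I" if "x \<in> lin_span n f I" "y \<in> lin_span n f I" for x y
    using that by (auto simp: lin_span_def lin_comb_add_coeffs[symmetric])
  show "a \<cdot>\<^sub>v x \<in> lin_span n f I" if "x \<in> lin_span n f I" for a x
    using that by (auto simp: lin_span_def lin_comb_smult_coeffs[symmetric])
qed (auto simp: lin_span_def)

lemma lin_span_subset:
  "lin_subspace n W \<Longrightarrow> finite I \<Longrightarrow> f ` I \<subseteq> W \<Longrightarrow> lin_span n f I \<subseteq> W"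
  by (auto simp: lin_span_def intro: lin_subspace_lin_comb)

lemma lin_indep_finite: "lin_indep n f I \<Longrightarrow> finite I"
  and lin_indep_carrier: "lin_indep n f I \<Longrightarrow> f ` I \<subseteq> carrier_vec n"
  by (auto simp: lin_indep_def)

lemma lin_indep_coeffs_eq:
  assumes ind: "lin_indep n f I" and eq: "lin_comb n f c I = lin_comb n f d I" and "i \<in> I"
  shows "c i = d i"
proof -
  have "lin_comb n f (\<lambda>i. c i - d i) I = 0\<^sub>v n" using eq by (simp add: lin_comb_diff_coeffs)
  then show ?thesis using ind \<open>i \<in> I\<close> unfolding lin_indep_def by auto
qed

lemma lin_indep_subset:
  assumes ind: "lin_indep n f I" and JI: "J \<subseteq> I" shows "lin_indep n f J"
  unfolding lin_indep_def
proof (intro conjI allI impI ballI)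
  have fin: "finite I" using ind by (rule lin_indep_finite)
  then show "finite J" using JI by (rule finite_subset[rotated])
  show "f ` J \<subseteq> carrier_vec n" using ind JI by (auto simp: lin_indep_def)
  fix c i assume c: "lin_comb n f c J = 0\<^sub>v n" and i: "i \<in> J"
  let ?c = "\<lambda>i. if i \<in> J then c i else 0"
  have "lin_comb n f ?c I = lin_comb n f ?c J" by (rule lin_comb_mono_neutral[OF fin JI]) auto
  also have "\<dots> = lin_comb n f c J" by (rule lin_comb_cong) auto
  also have "\<dots> = lin_comb n f (\<lambda>_. 0) I" unfolding c by (intro eq_vecI) auto
  finally have "?c i = 0" using lin_indep_coeffs_eq[OF ind] i JI by blast
  then show "c i = 0" using i by simp
qed

lemma lin_indep_insert:
  assumes ind: "lin_indep n f I" and k: "k \<notin> I" and v: "v \<in> carrier_vec n"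
    and nv: "v \<notin> lin_span n f I"
  shows "lin_indep n (f(k := v)) (insert k I)"
  unfolding lin_indep_def
proof (intro conjI allI impI ballI)
  have fin: "finite I" using ind by (rule lin_indep_finite)
  then show "finite (insert k I)" by simp
  show "(f(k := v)) ` insert k I \<subseteq> carrier_vec n" using ind v k by (auto simp: lin_indep_def)
  fix c i assume c: "lin_comb n (f(k := v)) c (insert k I) = 0\<^sub>v n" and i: "i \<in> insert k I"
  have "lin_comb n (f(k := v)) c I = lin_comb n f c I" by (rule lin_comb_cong) (use k in auto)
  then have eq: "c k \<cdot>\<^sub>v v + lin_comb n f c I = 0\<^sub>v n"
    using c lin_comb_insert[OF fin k, of "f(k := v)"] v by simp
  have ck: "c k = 0"
  proof (rule ccontr)
    assume ck: "c k \<noteq> 0"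
    have "v = lin_comb n f (\<lambda>i. - c i / c k) I"
    proof (intro eq_vecI)
      fix r assume "r < dim_vec (lin_comb n f (\<lambda>i. - c i / c k) I)"
      then have r: "r < n" by simp
      have "c k * v $ r + (\<Sum>i\<in>I. c i * f i $ r) = 0"
        using arg_cong[OF eq, of "\<lambda>x. x $ r"] r v by simp
      then have "v $ r = - (\<Sum>i\<in>I. c i * f i $ r) / c k" using ck by (simp add: field_simps)
      also have "\<dots> = (\<Sum>i\<in>I. - c i / c k * f i $ r)"
        by (simp add: sum_divide_distrib sum_negf[symmetric])
      finally show "v $ r = lin_comb n f (\<lambda>i. - c i / c k) I $ r" using r by simp
    qed (use v in auto)
    then show False using nv by (auto intro: lin_spanI)
  qed
  then have "lin_comb n f c I = c k \<cdot>\<^sub>v v + lin_comb n f c I" using v by (intro eq_vecI) auto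
  then have "lin_comb n f c I = 0\<^sub>v n" using eq by simp
  then show "c i = 0" using ind i ck by (auto simp: lin_indep_def)
qed

text \<open>Padding the coefficient matrix of the family with zero rows gives a singular square matrix,
  whose kernel yields a non-trivial relation.\<close>
lemma lin_indep_card: assumes ind: "lin_indep n f I" shows "card I \<le> n"
proof (rule ccontr)
  assume "\<not> card I \<le> n"
  then have nk: "n < card I" by simp
  define k where "k = card I"
  obtain h where h: "bij_betw h {0..<k} I"
    using ex_bij_betw_nat_finite[OF lin_indep_finite[OF ind]] unfolding k_def by auto
  define M where "M = mat k k (\<lambda>(i,j). if i < n then f (h j) $ i else (0::real))"
  have M: "M \<in> carrier_mat k k" unfolding M_def by auto
  have "M = mat\<^sub>r k k (\<lambda>i. if i = n then 0\<^sub>v k else vec k (\<lambda>j. if i < n then f (h j) $ i else 0))"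
    unfolding M_def by (intro eq_matI) auto
  also have "det \<dots> = 0" by (rule det_row_0) (use nk in \<open>auto simp: k_def\<close>)
  finally obtain v where v: "v \<in> carrier_vec k" "v \<noteq> 0\<^sub>v k" "M *\<^sub>v v = 0\<^sub>v k"
    using det_0_iff_vec_prod_zero[OF M] by blast
  define c where "c i = v $ (inv_into {0..<k} h i)" for i
  have hinv: "\<And>j. j < k \<Longrightarrow> inv_into {0..<k} h (h j) = j"
    using h by (simp add: bij_betw_def inv_into_f_f)
  have "lin_comb n f c I = 0\<^sub>v n"
  proof (intro eq_vecI)
    fix r assume "r < dim_vec (0\<^sub>v n :: real vec)"
    then have r: "r < n" by simp
    have "lin_comb n f c I $ r = (\<Sum>j\<in>{0..<k}. c (h j) * f (h j) $ r)"
      using r by (simp add: sum.reindex_bij_betw[symmetric, OF h])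
    also have "\<dots> = (M *\<^sub>v v) $ r"
      using r nk v(1) unfolding M_def k_def[symmetric]
      by (auto simp: c_def hinv scalar_prod_def algebra_simps intro!: sum.cong)
    finally show "lin_comb n f c I $ r = 0\<^sub>v n $ r" using v r nk by (simp add: k_def)
  qed auto
  then have "\<forall>i\<in>I. c i = 0" using ind by (auto simp: lin_indep_def)
  then have "\<forall>j<k. v $ j = 0" using h hinv unfolding c_def bij_betw_def by force
  then show False using v by (auto intro: eq_vecI)
qed

text \<open>The matrix with columns \<open>f i\<close> has a right inverse, so it is non-singular.\<close>
lemma lin_indep_if_spans:
  assumes f: "\<And>i. i < n \<Longrightarrow> f i \<in> carrier_vec n"
    and sp: "carrier_vec n \<subseteq> lin_span n f {..<n}"
  shows "lin_indep n f {..<n}"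
proof -
  define K where "K = mat n n (\<lambda>(r,j). f j $ r)"
  have K: "K \<in> carrier_mat n n" unfolding K_def by simp
  have Kv: "K *\<^sub>v vec n c = lin_comb n f c {..<n}" for c
    by (intro eq_vecI) (auto simp: K_def scalar_prod_def lessThan_atLeast0 algebra_simps intro!: sum.cong)
  have "unit_vec n r \<in> lin_span n f {..<n}" if "r < n" for r
    using sp unit_vec_carrier by blast
  then have "\<forall>r<n. \<exists>c. unit_vec n r = lin_comb n f c {..<n}" by (auto simp: lin_span_def)
  then obtain C where C: "\<And>r. r < n \<Longrightarrow> unit_vec n r = lin_comb n f (C r) {..<n}" by metis
  define Cm where "Cm = mat n n (\<lambda>(j,r). C r j)"
  have Cm: "Cm \<in> carrier_mat n n" unfolding Cm_def by simp
  have "K * Cm = 1\<^sub>m n"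
  proof (intro eq_matI)
    fix i r assume i: "i < dim_row (1\<^sub>m n :: real mat)" and r: "r < dim_col (1\<^sub>m n :: real mat)"
    have "(K * Cm) $$ (i, r) = lin_comb n f (C r) {..<n} $ i"
      using i r by (simp add: K_def Cm_def scalar_prod_def lessThan_atLeast0 algebra_simps)
    also have "\<dots> = (1\<^sub>m n :: real mat) $$ (i, r)" using C i r by (simp flip: C)
    finally show "(K * Cm) $$ (i, r) = (1\<^sub>m n :: real mat) $$ (i, r)" .
  qed (use K Cm in auto)
  then have "det K \<noteq> 0" using det_mult[OF K Cm] by auto
  then have Kinj: "v \<in> carrier_vec n \<Longrightarrow> K *\<^sub>v v = 0\<^sub>v n \<Longrightarrow> v = 0\<^sub>v n" for v
    using det_0_iff_vec_prod_zero[OF K] by blast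
  show ?thesis unfolding lin_indep_def
  proof (intro conjI allI impI ballI)
    fix c i assume "lin_comb n f c {..<n} = 0\<^sub>v n" and i: "i \<in> {..<n}"
    then have "vec n c = 0\<^sub>v n" using Kinj[of "vec n c"] Kv by simp
    then show "c i = 0" using i by (metis index_vec index_zero_vec(1) lessThan_iff)
  qed (use f in auto)
qed

lemma lin_indep_reindex:
  assumes inj: "inj_on h I" and ind: "lin_indep n (\<lambda>i. f (h i)) I"
  shows "lin_indep n f (h ` I)"
  unfolding lin_indep_def
proof (intro conjI allI impI ballI)
  show "finite (h ` I)" and "f ` h ` I \<subseteq> carrier_vec n" using ind by (auto simp: lin_indep_def)
  fix c x assume c: "lin_comb n f c (h ` I) = 0\<^sub>v n" and x: "x \<in> h ` I"
  have "lin_comb n f c (h ` I) = lin_comb n (\<lambda>i. f (h i)) (\<lambda>i. c (h i)) I"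
    using inj by (intro eq_vecI) (auto simp: sum.reindex)
  then have "\<forall>i\<in>I. c (h i) = 0" using ind c unfolding lin_indep_def by metis
  then show "c x = 0" using x by auto
qed

lemma lin_comb_notin_span_remove:
  assumes ind: "lin_indep n f I" and k: "k \<in> I" "\<alpha> k \<noteq> 0"
  shows "lin_comb n f \<alpha> I \<notin> lin_span n f (I - {k})"
proof
  assume "lin_comb n f \<alpha> I \<in> lin_span n f (I - {k})"
  then obtain \<beta> where \<beta>: "lin_comb n f \<alpha> I = lin_comb n f \<beta> (I - {k})" by (auto elim: lin_spanE)
  let ?\<beta> = "\<lambda>i. if i = k then 0 else \<beta> i"
  have "lin_comb n f \<alpha> I = lin_comb n f ?\<beta> (I - {k})" unfolding \<beta> by (rule lin_comb_cong) auto
  also have "\<dots> = lin_comb n f ?\<beta> I"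
    by (rule lin_comb_mono_neutral[symmetric]) (use lin_indep_finite[OF ind] in auto)
  finally have "\<alpha> k = ?\<beta> k" by (rule lin_indep_coeffs_eq[OF ind _ k(1)])
  then show False using k(2) by simp
qed

lemma lin_indep_mult:
  assumes A: "A \<in> carrier_mat m n" and ind: "lin_indep n f I"
    and inj: "\<And>x. x \<in> lin_span n f I \<Longrightarrow> A *\<^sub>v x = 0\<^sub>v m \<Longrightarrow> x = 0\<^sub>v n"
  shows "lin_indep m (\<lambda>i. A *\<^sub>v f i) I"
  unfolding lin_indep_def
proof (intro conjI allI impI ballI)
  show "finite I" using ind by (rule lin_indep_finite)
  show "(\<lambda>i. A *\<^sub>v f i) ` I \<subseteq> carrier_vec m" using A lin_indep_carrier[OF ind] by auto
  fix d i assume "lin_comb m (\<lambda>i. A *\<^sub>v f i) d I = 0\<^sub>v m" and i: "i \<in> I"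
  then have "A *\<^sub>v lin_comb n f d I = 0\<^sub>v m" using lin_comb_mult[OF A lin_indep_carrier[OF ind]]
    by simp
  then have "lin_comb n f d I = 0\<^sub>v n" by (intro inj lin_spanI) auto
  then show "d i = 0" using ind i by (auto simp: lin_indep_def)
qed

lemma span_dim_candidates:
  shows "finite {card I | I. \<exists>f. lin_indep n f I \<and> f ` I \<subseteq> W}"
    and "{card I | I. \<exists>f. lin_indep n f I \<and> f ` I \<subseteq> W} \<noteq> {}"
proof -
  show "finite {card I | I. \<exists>f. lin_indep n f I \<and> f ` I \<subseteq> W}"
    by (rule finite_subset[of _ "{..n}"]) (auto dest: lin_indep_card)
  have "lin_indep n f {}" for f by (auto simp: lin_indep_def)
  then show "{card I | I. \<exists>f. lin_indep n f I \<and> f ` I \<subseteq> W} \<noteq> {}" by blast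
qed

lemma span_dim_ge: "lin_indep n f I \<Longrightarrow> f ` I \<subseteq> W \<Longrightarrow> card I \<le> span_dim n W"
  unfolding span_dim_def by (rule Max_ge[OF span_dim_candidates(1)]) auto

lemma span_dim_attained:
  obtains f I where "lin_indep n f I" "f ` I \<subseteq> W" "card I = span_dim n W"
proof -
  have "span_dim n W \<in> {card I | I. \<exists>f. lin_indep n f I \<and> f ` I \<subseteq> W}"
    unfolding span_dim_def by (rule Max_in[OF span_dim_candidates])
  then show ?thesis using that by auto
qed

lemma span_dim_le: "span_dim n W \<le> n"
  by (metis span_dim_attained lin_indep_card)

lemma span_dim_mono: "W1 \<subseteq> W2 \<Longrightarrow> span_dim n W1 \<le> span_dim n W2"
  by (metis span_dim_attained span_dim_ge subset_trans)

lemma lin_span_max_indep: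
  assumes W: "W \<subseteq> carrier_vec n" and ind: "lin_indep n f I" and fI: "f ` I \<subseteq> W"
    and card: "span_dim n W \<le> card I"
  shows "W \<subseteq> lin_span n f I"
proof
  fix v assume v: "v \<in> W"
  show "v \<in> lin_span n f I"
  proof (rule ccontr)
    assume nv: "v \<notin> lin_span n f I"
    have fin: "finite I" using ind by (rule lin_indep_finite)
    obtain k :: nat where k: "k \<notin> I" using ex_new_if_finite[OF infinite_UNIV_nat fin] by auto
    have "lin_indep n (f(k := v)) (insert k I)"
      by (rule lin_indep_insert[OF ind k _ nv]) (use v W in auto)
    moreover have "(f(k := v)) ` insert k I \<subseteq> W" using fI v k by auto
    ultimately have "card (insert k I) \<le> span_dim n W" by (rule span_dim_ge)
    then show False using card fin k by simp
  qed
qed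

lemma span_dim_le_imp_subset:
  assumes W1: "lin_subspace n W1" and W2: "W2 \<subseteq> carrier_vec n"
    and sub: "W1 \<subseteq> W2" and dim: "span_dim n W2 \<le> span_dim n W1"
  shows "W2 \<subseteq> W1"
proof -
  obtain f I where ind: "lin_indep n f I" and fI: "f ` I \<subseteq> W1" and card: "card I = span_dim n W1"
    by (rule span_dim_attained)
  have "W2 \<subseteq> lin_span n f I" by (rule lin_span_max_indep[OF W2 ind]) (use fI sub dim card in auto)
  also have "\<dots> \<subseteq> W1" by (rule lin_span_subset[OF W1 lin_indep_finite[OF ind] fI])
  finally show ?thesis .
qed

text \<open>The functionals combine to a linear map into a space of dimension \<open>card J\<close> that is
  injective on \<open>W\<close>.\<close>
lemma span_dim_le_functionals:
  fixes \<phi> :: "'j \<Rightarrow> real vec \<Rightarrow> real"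
  assumes J: "finite J" and lin: "\<And>j. j \<in> J \<Longrightarrow> linear_functional n (\<phi> j)"
    and W: "lin_subspace n W"
    and sep: "\<And>x. x \<in> W \<Longrightarrow> \<forall>j\<in>J. \<phi> j x = 0 \<Longrightarrow> x = 0\<^sub>v n"
  shows "span_dim n W \<le> card J"
proof -
  obtain f I where ind: "lin_indep n f I" and fI: "f ` I \<subseteq> W" and card: "card I = span_dim n W"
    by (rule span_dim_attained)
  have finI: "finite I" and fc: "f ` I \<subseteq> carrier_vec n" using ind by (auto simp: lin_indep_def)
  define m where "m = card J"
  obtain h where h: "bij_betw h {0..<m} J" using ex_bij_betw_nat_finite[OF J] unfolding m_def
    by auto
  define G where "G x = vec m (\<lambda>r. \<phi> (h r) x)" for x
  have "lin_indep m (\<lambda>i. G (f i)) I"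
    unfolding lin_indep_def
  proof (intro conjI allI impI ballI)
    fix d i assume d: "lin_comb m (\<lambda>i. G (f i)) d I = 0\<^sub>v m" and i: "i \<in> I"
    have "\<phi> j (lin_comb n f d I) = 0" if j: "j \<in> J" for j
    proof -
      obtain r where r: "r < m" "j = h r" using h j by (auto simp: bij_betw_def)
      have "\<phi> j (lin_comb n f d I) = (\<Sum>i\<in>I. d i * \<phi> (h r) (f i))"
        using linear_functional_lin_comb[OF lin[OF j] finI fc] r by simp
      also have "\<dots> = 0" using arg_cong[OF d, of "\<lambda>v. v $ r"] r by (simp add: G_def)
      finally show ?thesis .
    qed
    then have "lin_comb n f d I = 0\<^sub>v n" by (intro sep lin_subspace_lin_comb[OF W finI fI]) auto
    then show "d i = 0" using ind i by (auto simp: lin_indep_def)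
  qed (use finI in \<open>auto simp: G_def\<close>)
  then show ?thesis using lin_indep_card card m_def by metis
qed

text \<open>On the line through a common non-zero of all but one of the functionals and a non-zero of the
  last one, each functional vanishes at most once.\<close>
lemma affine_common_nonzero:
  fixes P :: "('a \<Rightarrow> 'b :: field_char_0) set" and Y :: "'j \<Rightarrow> ('a \<Rightarrow> 'b) \<Rightarrow> 'b"
  assumes J: "finite J" and u0: "u0 \<in> P"
    and P: "\<And>u q t. u \<in> P \<Longrightarrow> q \<in> P \<Longrightarrow> (\<lambda>s. u s + t * (q s - u s)) \<in> P"
    and Y: "\<And>j u q t. j \<in> J \<Longrightarrow> u \<in> P \<Longrightarrow> q \<in> P \<Longrightarrow>
              Y j (\<lambda>s. u s + t * (q s - u s)) = Y j u + t * (Y j q - Y j u)"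
    and nz: "\<And>j. j \<in> J \<Longrightarrow> \<exists>q\<in>P. Y j q \<noteq> 0"
  shows "\<exists>u\<in>P. \<forall>j\<in>J. Y j u \<noteq> 0"
  using J Y nz
proof (induction J rule: finite_induct)
  case empty
  then show ?case using u0 by auto
next
  case (insert g J)
  obtain u where u: "u \<in> P" "\<forall>j\<in>J. Y j u \<noteq> 0" using insert by auto
  obtain q where q: "q \<in> P" "Y g q \<noteq> 0" using insert.prems(2)[of g] by auto
  define R where "R = (\<lambda>j. - Y j u / (Y j q - Y j u)) ` insert g J"
  have "finite R" unfolding R_def using insert by auto
  then obtain t where t: "t \<notin> R" using ex_new_if_finite[OF infinite_UNIV_char_0] by blast
  have "Y j (\<lambda>s. u s + t * (q s - u s)) \<noteq> 0" if j: "j \<in> insert g J" for j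
  proof
    assume "Y j (\<lambda>s. u s + t * (q s - u s)) = 0"
    then have Y0: "Y j u + t * (Y j q - Y j u) = 0" using insert.prems(1)[OF j u(1) q(1)] by simp
    show False
    proof (cases "Y j q = Y j u")
      case True
      then show False using Y0 j u(2) q(2) by auto
    next
      case False
      then have "t = - Y j u / (Y j q - Y j u)" using Y0 by (simp add: field_simps)
      then show False using t j unfolding R_def by auto
    qed
  qed
  then show ?case using P[OF u(1) q(1)] by blast
qed

section \<open>Adjugates\<close>

lemma replace_col_mult_vec:
  assumes A: "(A :: real mat) \<in> carrier_mat n n" and v: "v \<in> carrier_vec n"
    and y: "y \<in> carrier_vec n" and j: "j < n"
  shows "replace_col A v j *\<^sub>v y = A *\<^sub>v y + y $ j \<cdot>\<^sub>v (v - col A j)"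
proof (intro eq_vecI)
  fix r assume "r < dim_vec (A *\<^sub>v y + y $ j \<cdot>\<^sub>v (v - col A j))"
  then have r: "r < n" using A by simp
  have "(replace_col A v j *\<^sub>v y) $ r = (\<Sum>k<n. (if k = j then v $ r else A $$ (r,k)) * y $ k)"
    using A y r by (simp add: replace_col_def scalar_prod_def lessThan_atLeast0)
  also have "\<dots> = (\<Sum>k<n. A $$ (r,k) * y $ k + (if k = j then (v $ r - A $$ (r,j)) * y $ j else 0))"
    by (rule sum.cong) (auto simp: algebra_simps)
  also have "\<dots> = (A *\<^sub>v y + y $ j \<cdot>\<^sub>v (v - col A j)) $ r"
    using A y r v j by (simp add: sum.distrib scalar_prod_def lessThan_atLeast0 algebra_simps)
  finally show "(replace_col A v j *\<^sub>v y) $ r = (A *\<^sub>v y + y $ j \<cdot>\<^sub>v (v - col A j)) $ r" .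
qed (use A v in \<open>auto simp: replace_col_def\<close>)

lemma adj_mat_mult_vec_index:
  assumes A: "(A :: real mat) \<in> carrier_mat n n" and b: "b \<in> carrier_vec n" and k: "k < n"
  shows "(adj_mat A *\<^sub>v b) $ k = det (replace_col A b k)"
proof -
  have Ab: "replace_col A b k \<in> carrier_mat n n" using A by (auto simp: replace_col_def)
  have "(adj_mat A *\<^sub>v b) $ k = row (adj_mat A) k \<bullet> b" using adj_mat[OF A] b k by auto
  also have "\<dots> = det (replace_col A b k)" unfolding scalar_prod_def using b k A
    by (subst laplace_expansion_column[OF Ab k], auto intro!: sum.cong arg_cong[of _ _ det]
      arg_cong[of _ _ "\<lambda> x. _ * x"] eq_matI
      simp: replace_col_def adj_mat_def Matrix.row_def cofactor_def mat_delete_def ac_simps)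
  finally show ?thesis .
qed

lemma mult_adj_mat_vec:
  assumes A: "(A :: real mat) \<in> carrier_mat n n" and b: "b \<in> carrier_vec n"
  shows "A *\<^sub>v (adj_mat A *\<^sub>v b) = det A \<cdot>\<^sub>v b"
proof -
  have "A *\<^sub>v (adj_mat A *\<^sub>v b) = (A * adj_mat A) *\<^sub>v b"
    using adj_mat(1)[OF A] A b by (simp add: assoc_mult_mat_vec)
  also have "\<dots> = det A \<cdot>\<^sub>v (1\<^sub>m n *\<^sub>v b)" using adj_mat(2)[OF A] b by auto
  also have "\<dots> = det A \<cdot>\<^sub>v b" using b by simp
  finally show ?thesis .
qed

lemma adj_mat_mult_mult_vec:
  assumes A: "(A :: real mat) \<in> carrier_mat n n" and y: "y \<in> carrier_vec n"
  shows "adj_mat A *\<^sub>v (A *\<^sub>v y) = det A \<cdot>\<^sub>v y"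
proof -
  have "adj_mat A *\<^sub>v (A *\<^sub>v y) = (adj_mat A * A) *\<^sub>v y"
    using adj_mat(1)[OF A] A y by (simp add: assoc_mult_mat_vec)
  also have "\<dots> = det A \<cdot>\<^sub>v (1\<^sub>m n *\<^sub>v y)" using adj_mat(3)[OF A] y by auto
  also have "\<dots> = det A \<cdot>\<^sub>v y" using y by simp
  finally show ?thesis .
qed

text \<open>For singular \<open>A\<close>, let \<open>w = adj A b\<close> and \<open>w $ j \<noteq> 0\<close>. The kernel vector
  \<open>w $ j \<cdot> x - x $ j \<cdot> w\<close> has vanishing \<open>j\<close>-th entry, so it is also in the kernel of \<open>A\<close> with
  column \<open>j\<close> replaced by \<open>b\<close>, a matrix of determinant \<open>w $ j\<close> by Cramer's rule.\<close>
lemma kernel_on_adj_mat_line: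
  assumes A: "(A :: real mat) \<in> carrier_mat n n" and b: "b \<in> carrier_vec n"
    and w: "adj_mat A *\<^sub>v b \<noteq> 0\<^sub>v n"
    and x: "x \<in> carrier_vec n" and Ax: "A *\<^sub>v x = 0\<^sub>v n"
  shows "\<exists>\<beta>. x = \<beta> \<cdot>\<^sub>v (adj_mat A *\<^sub>v b)"
proof (cases "det A = 0")
  case False
  have "det A \<cdot>\<^sub>v x = adj_mat A *\<^sub>v (A *\<^sub>v x)" using adj_mat_mult_mult_vec[OF A x] by simp
  also have "\<dots> = 0\<^sub>v n" unfolding Ax using adj_mat(1)[OF A] by (intro eq_vecI) auto
  finally have dx: "det A \<cdot>\<^sub>v x = 0\<^sub>v n" .
  have "x $ i = 0" if "i < n" for i
    using arg_cong[OF dx, of "\<lambda>v. v $ i"] that x False by simp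
  then have "x = 0 \<cdot>\<^sub>v (adj_mat A *\<^sub>v b)" using x adj_mat(1)[OF A] b by (intro eq_vecI) auto
  then show ?thesis by blast
next
  case True
  define w where "w = adj_mat A *\<^sub>v b"
  have wc: "w \<in> carrier_vec n" using adj_mat(1)[OF A] b by (simp add: w_def)
  obtain j where j: "j < n" "w $ j \<noteq> 0" using w wc unfolding w_def[symmetric]
    by (metis eq_vecI carrier_vecD index_zero_vec)
  define B where "B = replace_col A b j"
  have B: "B \<in> carrier_mat n n" using A by (auto simp: B_def replace_col_def)
  have "det B = w $ j" unfolding B_def w_def
    by (rule adj_mat_mult_vec_index[symmetric, OF A b j(1)])
  then have Binj: "y \<in> carrier_vec n \<Longrightarrow> B *\<^sub>v y = 0\<^sub>v n \<Longrightarrow> y = 0\<^sub>v n" for y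
    using det_0_iff_vec_prod_zero[OF B] j(2) by auto
  define y where "y = w $ j \<cdot>\<^sub>v x - x $ j \<cdot>\<^sub>v w"
  have y: "y \<in> carrier_vec n" using x wc by (simp add: y_def)
  have Aw: "A *\<^sub>v w = 0\<^sub>v n" using mult_adj_mat_vec[OF A b] True b
    by (auto simp: w_def intro: eq_vecI)
  have "A *\<^sub>v y = w $ j \<cdot>\<^sub>v (A *\<^sub>v x) - x $ j \<cdot>\<^sub>v (A *\<^sub>v w)"
    using A x wc by (simp add: y_def mult_minus_distrib_mat_vec mult_mat_vec)
  then have Ay: "A *\<^sub>v y = 0\<^sub>v n" using Ax Aw by (auto intro: eq_vecI)
  have "y $ j = 0" using x wc j by (simp add: y_def)
  have "B *\<^sub>v y = A *\<^sub>v y + y $ j \<cdot>\<^sub>v (b - col A j)"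
    unfolding B_def by (rule replace_col_mult_vec[OF A b y j(1)])
  also have "\<dots> = 0\<^sub>v n" using Ay \<open>y $ j = 0\<close> A b by (intro eq_vecI) auto
  finally have "B *\<^sub>v y = 0\<^sub>v n" .
  then have y0: "y = 0\<^sub>v n" using Binj y by blast
  have "w $ j * x $ r = x $ j * w $ r" if "r < n" for r
    using arg_cong[OF y0, of "\<lambda>v. v $ r"] that x wc by (simp add: y_def)
  then have "x = (x $ j / w $ j) \<cdot>\<^sub>v w" using x wc j by (intro eq_vecI) (auto simp: field_simps)
  then show ?thesis unfolding w_def by blast
qed

text \<open>The kernel of \<open>A\<close> meets the span only in \<open>0\<close>, and \<open>b = A y\<close> would give \<open>adj A b = det A \<cdot> y\<close>.\<close>
lemma lin_indep_mult_adj_mat: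
  assumes A: "(A :: real mat) \<in> carrier_mat n n" and b: "b \<in> carrier_vec n"
    and ind: "lin_indep n f I" and w: "adj_mat A *\<^sub>v b \<notin> lin_span n f I"
  shows "lin_indep n (\<lambda>i. A *\<^sub>v f i) I" and "b \<notin> lin_span n (\<lambda>i. A *\<^sub>v f i) I"
proof -
  have S: "lin_subspace n (lin_span n f I)" by (rule lin_subspace_lin_span)
  then have "adj_mat A *\<^sub>v b \<noteq> 0\<^sub>v n" using w by (auto simp: lin_subspace_def)
  have "x = 0\<^sub>v n" if x: "x \<in> lin_span n f I" and Ax: "A *\<^sub>v x = 0\<^sub>v n" for x
  proof -
    have xc: "x \<in> carrier_vec n" using S x by (rule lin_subspace_carrier)
    obtain \<beta> where x\<beta>: "x = \<beta> \<cdot>\<^sub>v (adj_mat A *\<^sub>v b)"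
      using kernel_on_adj_mat_line[OF A b \<open>adj_mat A *\<^sub>v b \<noteq> 0\<^sub>v n\<close> xc Ax] by blast
    have "\<beta> = 0"
    proof (rule ccontr)
      assume "\<beta> \<noteq> 0"
      then have "adj_mat A *\<^sub>v b = (1 / \<beta>) \<cdot>\<^sub>v x"
        using adj_mat(1)[OF A] b unfolding x\<beta> by (intro eq_vecI) auto
      then show False using S x w by (simp add: lin_subspace_def)
    qed
    then show ?thesis unfolding x\<beta> using adj_mat(1)[OF A] b by (intro eq_vecI) auto
  qed
  then show "lin_indep n (\<lambda>i. A *\<^sub>v f i) I" by (rule lin_indep_mult[OF A ind])
  show "b \<notin> lin_span n (\<lambda>i. A *\<^sub>v f i) I"
  proof
    assume "b \<in> lin_span n (\<lambda>i. A *\<^sub>v f i) I"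
    then obtain d where "b = lin_comb n (\<lambda>i. A *\<^sub>v f i) d I" by (auto elim: lin_spanE)
    then have "b = A *\<^sub>v lin_comb n f d I" using lin_comb_mult[OF A lin_indep_carrier[OF ind]]
      by simp
    then have "adj_mat A *\<^sub>v b = det A \<cdot>\<^sub>v lin_comb n f d I" using adj_mat_mult_mult_vec[OF A]
      by simp
    moreover have "lin_comb n f d I \<in> lin_span n f I" by (rule lin_spanI) (rule refl)
    ultimately show False using S w by (simp add: lin_subspace_def)
  qed
qed

section \<open>Trajectories and output feedback\<close>

lemma next_multiple:
  fixes k l :: int
  assumes "0 < l"
  obtains d j where "0 \<le> d" and "d < l" and "k + d = j * l"
proof (rule that)
  show "0 \<le> (- k) mod l" and "(- k) mod l < l" using assms by simp_all
  have "(- k) div l * l + (- k) mod l = - k" by (rule div_mult_mod_eq)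
  then show "k + (- k) mod l = - ((- k) div l) * l" by (simp only: mult_minus_left)
qed

locale ltv_system =
  fixes n :: nat and A b c :: "int \<Rightarrow> real mat"
  assumes dim_A: "\<And>k. A k \<in> carrier_mat n n"
    and dim_b: "\<And>k. b k \<in> carrier_mat n 1"
    and dim_c: "\<And>k. c k \<in> carrier_mat 1 n"
begin

definition bvec :: "int \<Rightarrow> real vec" where "bvec t = col (b t) 0"
definition cvec :: "int \<Rightarrow> real vec" where "cvec t = row (c t) 0"

fun free_traj :: "int \<Rightarrow> real vec \<Rightarrow> nat \<Rightarrow> real vec" where
  "free_traj t v 0 = v"
| "free_traj t v (Suc m) = A (t + int m) *\<^sub>v free_traj t v m"

text \<open>\<open>impulse_resp s m\<close> is the state at time \<open>s + 1 + m\<close> caused by a unit input at time \<open>s\<close>.\<close>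
fun impulse_resp :: "int \<Rightarrow> nat \<Rightarrow> real vec" where
  "impulse_resp s 0 = bvec s"
| "impulse_resp s (Suc m) = A (s + 1 + int m) *\<^sub>v impulse_resp s m"

lemma bvec_carrier [simp]: "bvec t \<in> carrier_vec n"
  using dim_b[of t] by (auto simp: bvec_def)

lemma cvec_carrier [simp]: "cvec t \<in> carrier_vec n"
  using dim_c[of t] by (auto simp: cvec_def)

lemma dim_row_A [simp]: "dim_row (A t) = n" and dim_col_A [simp]: "dim_col (A t) = n"
  using carrier_matD[OF dim_A[of t]] by auto

lemma A_mult_zero_vec [simp]: "A t *\<^sub>v 0\<^sub>v n = 0\<^sub>v n"
  by (intro eq_vecI) (auto simp: scalar_prod_def)

lemma A_mult_vec_carrier [simp]: "x \<in> carrier_vec n \<Longrightarrow> A t *\<^sub>v x \<in> carrier_vec n"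
  by (rule mult_mat_vec_carrier[OF dim_A])

lemma dim_bvec [simp]: "dim_vec (bvec t) = n"
  using bvec_carrier[of t] by (metis carrier_vecD)

lemma free_traj_carrier [simp]: "v \<in> carrier_vec n \<Longrightarrow> free_traj t v m \<in> carrier_vec n"
  by (induction m) auto

lemma dim_free_traj [simp]: "v \<in> carrier_vec n \<Longrightarrow> dim_vec (free_traj t v m) = n"
  using free_traj_carrier by (metis carrier_vecD)

lemma free_traj_zero [simp]: "free_traj t (0\<^sub>v n) m = 0\<^sub>v n"
  by (induction m) auto

lemma impulse_resp_carrier [simp]: "impulse_resp s m \<in> carrier_vec n"
  by (induction m) auto

lemma dim_impulse_resp [simp]: "dim_vec (impulse_resp s m) = n"
  using impulse_resp_carrier by (metis carrier_vecD)

lemma sys_output_cvec: "x \<in> carrier_vec n \<Longrightarrow> sys_output c t x = cvec t \<bullet> x"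
  using dim_c[of t] by (simp add: sys_output_def cvec_def)

lemma traj_Suc_bvec:
  "traj A b u t xi (Suc m) = A (t + int m) *\<^sub>v traj A b u t xi m + u (t + int m) \<cdot>\<^sub>v bvec (t + int m)"
  by (simp add: bvec_def)

lemma traj_carrier [simp]: "xi \<in> carrier_vec n \<Longrightarrow> traj A b u t xi m \<in> carrier_vec n"
  by (induction m) (auto simp: traj_Suc_bvec simp del: traj.simps(2))

lemma A_impulse_resp:
  "i < m \<Longrightarrow> A (t + int m) *\<^sub>v impulse_resp (t + int i) (m - Suc i) = impulse_resp (t + int i) (m - i)"
proof -
  assume i: "i < m"
  then have "m - i = Suc (m - Suc i)" and "t + int i + 1 + int (m - Suc i) = t + int m" by auto
  then show ?thesis by simp
qed

lemma traj_superposition: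
  assumes xi: "xi \<in> carrier_vec n"
  shows "traj A b u t xi m =
    free_traj t xi m + lin_comb n (\<lambda>i. impulse_resp (t + int i) (m - i - 1)) (\<lambda>i. u (t + int i)) {..<m}"
proof (induction m)
  case 0
  show ?case using xi by (intro eq_vecI) auto
next
  case (Suc m)
  let ?f = "\<lambda>m i. impulse_resp (t + int i) (m - i - 1)" and ?c = "\<lambda>i. u (t + int i)"
  have "A (t + int m) *\<^sub>v lin_comb n (?f m) ?c {..<m}
      = lin_comb n (\<lambda>i. A (t + int m) *\<^sub>v ?f m i) ?c {..<m}"
    by (rule lin_comb_mult) auto
  also have "\<dots> = lin_comb n (?f (Suc m)) ?c {..<m}"
    by (rule lin_comb_cong) (auto simp: A_impulse_resp)
  finally have "traj A b u t xi (Suc m) =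
      free_traj t xi (Suc m) + lin_comb n (?f (Suc m)) ?c {..<m} + ?c m \<cdot>\<^sub>v ?f (Suc m) m"
    using xi by (simp add: Suc mult_add_distrib_mat_vec[OF dim_A] bvec_def)
  also have "\<dots> = free_traj t xi (Suc m) + lin_comb n (?f (Suc m)) ?c {..<Suc m}"
    using xi by (intro eq_vecI) (auto simp: lessThan_Suc)
  finally show ?case .
qed

lemma traj_zero_input: "traj A b (\<lambda>_. 0) t xi m = free_traj t xi m" if "xi \<in> carrier_vec n"
  using that by (subst traj_superposition) (auto intro!: eq_vecI)

lemma traj_cong:
  "(\<And>i. i < m \<Longrightarrow> u (t + int i) = u' (t + int i)) \<Longrightarrow> traj A b u t xi m = traj A b u' t xi m"
  by (induction m) auto

lemma traj_stays_zero:
  assumes "traj A b u t xi m = 0\<^sub>v n" and "\<And>i. m \<le> i \<Longrightarrow> i < N \<Longrightarrow> u (t + int i) = 0" and "m \<le> N"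
  shows "traj A b u t xi N = 0\<^sub>v n"
proof -
  have "traj A b u t xi (m + i) = 0\<^sub>v n" if "m + i \<le> N" for i
    using that
  proof (induction i)
    case (Suc i)
    then have "traj A b u t xi (m + i) = 0\<^sub>v n" and "u (t + int (m + i)) = 0"
      using assms(2)[of "m + i"] by auto
    then show ?case by (simp only: add_Suc_right traj_Suc_bvec) (intro eq_vecI; simp)
  qed (use assms(1) in simp)
  from this[of "N - m"] show ?thesis using assms(3) by simp
qed

lemma traj_affine:
  assumes xi: "xi \<in> carrier_vec n"
  shows "traj A b (\<lambda>s. u s + a * (q s - u s)) t xi m
    = traj A b u t xi m + a \<cdot>\<^sub>v (traj A b q t xi m - traj A b u t xi m)"
  unfolding traj_superposition[OF xi] using xi by (intro eq_vecI)
    (auto simp: algebra_simps sum.distrib sum_distrib_left sum_subtractf)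

lemma free_traj_add:
  "x \<in> carrier_vec n \<Longrightarrow> y \<in> carrier_vec n \<Longrightarrow> free_traj t (x + y) m = free_traj t x m + free_traj t y m"
  by (induction m) (auto simp: mult_add_distrib_mat_vec[OF dim_A])

lemma free_traj_smult: "x \<in> carrier_vec n \<Longrightarrow> free_traj t (a \<cdot>\<^sub>v x) m = a \<cdot>\<^sub>v free_traj t x m"
  by (induction m) (auto simp: mult_mat_vec[OF dim_A])

lemma linear_functional_free_traj:
  "v \<in> carrier_vec n \<Longrightarrow> linear_functional n (\<lambda>x. v \<bullet> free_traj t x m)"
  by (simp add: linear_functional_def free_traj_add free_traj_smult
      scalar_prod_add_distrib[of _ n] scalar_prod_smult_distrib[of _ n])

lemma closed_loop_mult_vec:
  assumes x: "x \<in> carrier_vec n"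
  shows "(A t + f \<cdot>\<^sub>m (b t * c t)) *\<^sub>v x = A t *\<^sub>v x + (f * (cvec t \<bullet> x)) \<cdot>\<^sub>v bvec t"
proof (intro eq_vecI)
  fix r assume "r < dim_vec (A t *\<^sub>v x + (f * (cvec t \<bullet> x)) \<cdot>\<^sub>v bvec t)"
  then have r: "r < n" by simp
  have "((A t + f \<cdot>\<^sub>m (b t * c t)) *\<^sub>v x) $ r =
      (\<Sum>k<n. (A t $$ (r,k) + f * (b t $$ (r,0) * c t $$ (0,k))) * x $ k)"
    using r x dim_A[of t] dim_b[of t] dim_c[of t]
    by (auto simp: scalar_prod_def lessThan_atLeast0 intro!: sum.cong)
  also have "\<dots> = (A t *\<^sub>v x + (f * (cvec t \<bullet> x)) \<cdot>\<^sub>v bvec t) $ r"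
    using r x dim_A[of t] dim_b[of t] dim_c[of t]
    by (auto simp: scalar_prod_def lessThan_atLeast0 sum.distrib sum_distrib_left algebra_simps
        cvec_def bvec_def intro!: sum.cong)
  finally show "((A t + f \<cdot>\<^sub>m (b t * c t)) *\<^sub>v x) $ r
      = (A t *\<^sub>v x + (f * (cvec t \<bullet> x)) \<cdot>\<^sub>v bvec t) $ r" .
qed (use x dim_A[of t] dim_b[of t] dim_c[of t] in auto)

lemma closed_loop_carrier: "A t + f \<cdot>\<^sub>m (b t * c t) \<in> carrier_mat n n"
  using dim_A[of t] dim_b[of t] dim_c[of t] by auto

lemma cl_traj_carrier [simp]: "xi \<in> carrier_vec n \<Longrightarrow> cl_traj A b c F t xi m \<in> carrier_vec n"
  by (induction m) (auto simp: closed_loop_mult_vec)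

lemma cl_traj_add:
  "cl_traj A b c F t xi (m1 + m2) = cl_traj A b c F (t + int m1) (cl_traj A b c F t xi m1) m2"
  by (induction m2) (auto simp: add.assoc)

lemma cl_traj_cong:
  "(\<And>i. i < m \<Longrightarrow> F (t + int i) = F' (t + int i)) \<Longrightarrow> cl_traj A b c F t xi m = cl_traj A b c F' t xi m"
  by (induction m) auto

lemma cl_traj_zero [simp]: "cl_traj A b c F t (0\<^sub>v n) m = 0\<^sub>v n"
  by (induction m) (auto simp: closed_loop_mult_vec intro: eq_vecI)

lemma cl_traj_lin_comb:
  "f ` I \<subseteq> carrier_vec n \<Longrightarrow>
   cl_traj A b c F t (lin_comb n f d I) m = lin_comb n (\<lambda>i. cl_traj A b c F t (f i) m) d I"
proof (induction m)
  case (Suc m)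
  then show ?case by (simp, subst lin_comb_mult[OF closed_loop_carrier]) auto
qed simp

lemma cl_traj_stays_zero:
  assumes "cl_traj A b c F t xi m = 0\<^sub>v n" and "m \<le> N"
  shows "cl_traj A b c F t xi N = 0\<^sub>v n"
  using cl_traj_add[of F t xi m "N - m"] assms by simp

text \<open>Where the output vanishes, \<open>F = u / 0 = 0\<close>, which is harmless since \<open>u\<close> vanishes there too.\<close>
lemma cl_traj_realizes_input:
  assumes xi: "xi \<in> carrier_vec n"
    and u: "\<And>i. i < m \<Longrightarrow> cvec (t + int i) \<bullet> traj A b u t xi i = 0 \<Longrightarrow> u (t + int i) = 0"
  shows "cl_traj A b c (\<lambda>s. u s / (cvec s \<bullet> traj A b u t xi (nat (s - t)))) t xi m = traj A b u t xi m"
  using u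
proof (induction m)
  case (Suc m)
  then have "cl_traj A b c (\<lambda>s. u s / (cvec s \<bullet> traj A b u t xi (nat (s - t)))) t xi m
      = traj A b u t xi m"
    by simp
  moreover have "u (t + int m) / (cvec (t + int m) \<bullet> traj A b u t xi m)
      * (cvec (t + int m) \<bullet> traj A b u t xi m)
      = u (t + int m)"
    using Suc.prems[of m] by (cases "cvec (t + int m) \<bullet> traj A b u t xi m = 0") auto
  ultimately show ?case using xi by (simp add: closed_loop_mult_vec traj_Suc_bvec del: traj.simps)
qed simp

lemma cl_traj_kills_unit_vecs:
  assumes kill: "\<And>t z. z \<in> carrier_vec n \<Longrightarrow> \<exists>F. cl_traj A b c F t z N = 0\<^sub>v n"
  shows "\<exists>F. \<forall>i<r. cl_traj A b c F t0 (unit_vec n i) (r * N) = 0\<^sub>v n"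
proof (induction r)
  case (Suc r)
  then obtain F where F: "\<forall>i<r. cl_traj A b c F t0 (unit_vec n i) (r * N) = 0\<^sub>v n" by auto
  define t where "t = t0 + int (r * N)"
  obtain G where G: "cl_traj A b c G t (cl_traj A b c F t0 (unit_vec n r) (r * N)) N = 0\<^sub>v n"
    using kill[of "cl_traj A b c F t0 (unit_vec n r) (r * N)" t] by auto
  define F' where "F' s = (if s < t then F s else G s)" for s
  have "cl_traj A b c F' t0 (unit_vec n i) (Suc r * N) = 0\<^sub>v n" if i: "i < Suc r" for i
  proof -
    have "cl_traj A b c F' t0 (unit_vec n i) (Suc r * N)
        = cl_traj A b c F' t (cl_traj A b c F' t0 (unit_vec n i) (r * N)) N"
      unfolding t_def by (metis cl_traj_add add.commute mult_Suc)
    also have "cl_traj A b c F' t0 (unit_vec n i) (r * N) = cl_traj A b c F t0 (unit_vec n i) (r * N)"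
      by (rule cl_traj_cong) (simp add: F'_def t_def flip: of_nat_mult)
    also have "cl_traj A b c F' t (cl_traj A b c F t0 (unit_vec n i) (r * N)) N
        = cl_traj A b c G t (cl_traj A b c F t0 (unit_vec n i) (r * N)) N"
      by (rule cl_traj_cong) (simp add: F'_def)
    also have "\<dots> = 0\<^sub>v n" using F G i by (cases "i < r") (auto simp: less_Suc_eq)
    finally show ?thesis .
  qed
  then show ?case by blast
qed simp

lemma cl_traj_kills_all_states:
  assumes kill: "\<And>t z. z \<in> carrier_vec n \<Longrightarrow> \<exists>F. cl_traj A b c F t z N = 0\<^sub>v n"
  shows "\<exists>F. \<forall>x\<in>carrier_vec n. cl_traj A b c F t0 x (n * N) = 0\<^sub>v n"
proof -
  obtain F where F: "\<forall>i<n. cl_traj A b c F t0 (unit_vec n i) (n * N) = 0\<^sub>v n"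
    using cl_traj_kills_unit_vecs[OF kill] by blast
  have "cl_traj A b c F t0 x (n * N) = 0\<^sub>v n" if x: "x \<in> carrier_vec n" for x
  proof -
    have "lin_comb n (unit_vec n) (\<lambda>i. x $ i) {..<n} = x"
    proof (intro eq_vecI)
      fix r assume "r < dim_vec x"
      then have r: "r < n" using x by simp
      have "(\<Sum>i<n. x $ i * unit_vec n i $ r) = (\<Sum>i<n. if i = r then x $ r else 0)"
        by (rule sum.cong) (auto simp: r)
      then show "lin_comb n (unit_vec n) (\<lambda>i. x $ i) {..<n} $ r = x $ r" using r by simp
    qed (use x in auto)
    then have "cl_traj A b c F t0 x (n * N) =
        lin_comb n (\<lambda>i. cl_traj A b c F t0 (unit_vec n i) (n * N)) (\<lambda>i. x $ i) {..<n}"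
      using cl_traj_lin_comb[of "unit_vec n" "{..<n}" F t0 "\<lambda>i. x $ i" "n * N"] unit_vec_carrier
      by (simp add: image_subset_iff)
    also have "\<dots> = 0\<^sub>v n" using F by (intro eq_vecI) auto
    finally show ?thesis .
  qed
  then show ?thesis by blast
qed

text \<open>The feedbacks for the start times \<open>j L\<close> are glued together; from any start time the next
  block boundary is fewer than \<open>L\<close> steps away.\<close>
lemma cl_traj_kills_from_all_times:
  assumes kill: "\<And>t0. \<exists>F. \<forall>x\<in>carrier_vec n. cl_traj A b c F t0 x L = 0\<^sub>v n"
  shows "\<exists>F. \<forall>k. \<forall>x\<in>carrier_vec n. cl_traj A b c F k x (2 * L) = 0\<^sub>v n"
proof (cases "L = 0")
  case True
  then show ?thesis using kill[of 0] by auto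
next
  case False
  define l where "l = int L"
  have l: "l > 0" using False by (simp add: l_def)
  have "\<forall>j. \<exists>F. \<forall>x\<in>carrier_vec n. cl_traj A b c F (j * l) x L = 0\<^sub>v n" using kill by blast
  then obtain Fs where Fs: "\<And>j x. x \<in> carrier_vec n \<Longrightarrow> cl_traj A b c (Fs j) (j * l) x L = 0\<^sub>v n"
    by metis
  define F where "F s = Fs (s div l) s" for s
  have block: "cl_traj A b c F (j * l) x L = 0\<^sub>v n" if x: "x \<in> carrier_vec n" for j x
  proof -
    have "cl_traj A b c F (j * l) x L = cl_traj A b c (Fs j) (j * l) x L"
    proof (rule cl_traj_cong)
      fix i assume "i < L"
      then have "(j * l + int i) div l = j" using l by (simp add: l_def)
      then show "F (j * l + int i) = Fs j (j * l + int i)" by (simp add: F_def)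
    qed
    then show ?thesis using Fs[OF x] by simp
  qed
  have "cl_traj A b c F k x (2 * L) = 0\<^sub>v n" if x: "x \<in> carrier_vec n" for k x
  proof -
    obtain d j where d: "d < L" and kd: "k + int d = j * l"
      using next_multiple[OF l, of k] unfolding l_def by (metis nonneg_int_cases of_nat_less_iff)
    have "2 * L = d + (L + (L - d))" using d by simp
    then have "cl_traj A b c F k x (2 * L)
        = cl_traj A b c F (k + int d) (cl_traj A b c F k x d) (L + (L - d))"
      by (simp only: cl_traj_add)
    also have "\<dots> = cl_traj A b c F (k + int d + int L)
        (cl_traj A b c F (k + int d) (cl_traj A b c F k x d) L) (L - d)"
      by (rule cl_traj_add)
    also have "cl_traj A b c F (k + int d) (cl_traj A b c F k x d) L = 0\<^sub>v n"
      unfolding kd using x by (intro block) simp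
    finally show ?thesis by simp
  qed
  then show ?thesis by blast
qed

end

locale feedback_problem = ltv_system +
  assumes ctrb: "completely_controllable n A b"
    and obsv: "completely_observable n A b c"
    and adj: "\<And>k. (c k * adj_mat (A k) * b k) $$ (0, 0) \<noteq> 0"
begin

definition adj_b :: "int \<Rightarrow> real vec" where "adj_b t = adj_mat (A t) *\<^sub>v bvec t"

lemma adj_b_carrier [simp]: "adj_b t \<in> carrier_vec n"
  using adj_mat(1)[OF dim_A[of t]] by (simp add: adj_b_def)

lemma dim_adj_b [simp]: "dim_vec (adj_b t) = n"
  using adj_b_carrier by (metis carrier_vecD)

lemma cvec_adj_b: "cvec t \<bullet> adj_b t \<noteq> 0"
proof -
  have aA: "adj_mat (A t) \<in> carrier_mat n n" by (rule adj_mat(1)[OF dim_A])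
  have "(c t * adj_mat (A t) * b t) $$ (0, 0) = (c t * (adj_mat (A t) * b t)) $$ (0, 0)"
    by (simp add: assoc_mult_mat[OF dim_c aA dim_b])
  also have "\<dots> = cvec t \<bullet> adj_b t"
    using dim_c[of t] aA dim_b[of t] col_mult2[OF aA dim_b, of 0]
    by (simp add: index_mult_mat cvec_def adj_b_def bvec_def)
  finally show ?thesis using adj[of t] by simp
qed

lemma A_adj_b: "A t *\<^sub>v adj_b t = det (A t) \<cdot>\<^sub>v bvec t"
  using mult_adj_mat_vec[OF dim_A[of t] bvec_carrier[of t]] by (simp add: adj_b_def)

lemma impulse_resps_indep: "lin_indep n (\<lambda>j. impulse_resp (t + int j) (n - j - 1)) {..<n}"
proof (rule lin_indep_if_spans)
  show "carrier_vec n \<subseteq> lin_span n (\<lambda>j. impulse_resp (t + int j) (n - j - 1)) {..<n}"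
  proof
    fix v :: "real vec" assume v: "v \<in> carrier_vec n"
    obtain u where "traj A b u t (0\<^sub>v n) n = v"
      using ctrb[unfolded completely_controllable_def, rule_format,
          where k = t and xs = "0\<^sub>v n" and xf = v] v
      by auto
    then have "v = lin_comb n (\<lambda>j. impulse_resp (t + int j) (n - j - 1)) (\<lambda>j. u (t + int j)) {..<n}"
      using traj_superposition[of "0\<^sub>v n" u t n] by simp
    then show "v \<in> lin_span n (\<lambda>j. impulse_resp (t + int j) (n - j - 1)) {..<n}"
      by (rule lin_spanI)
  qed
qed simp

lemma observable_free_traj:
  assumes x: "x \<in> carrier_vec n" and y: "\<And>i. i < n \<Longrightarrow> cvec (t + int i) \<bullet> free_traj t x i = 0"
  shows "x = 0\<^sub>v n"
proof -
  have "sys_output c (t + int i) (traj A b (\<lambda>_. 0) t x i)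
      = sys_output c (t + int i) (traj A b (\<lambda>_. 0) t (0\<^sub>v n) i)" if "i < n" for i
    using x y[OF that] by (simp add: traj_zero_input sys_output_cvec)
  then show ?thesis
    using obsv[unfolded completely_observable_def, rule_format,
        where k = t and u = "\<lambda>_. 0" and ?x1.0 = x and ?x2.0 = "0\<^sub>v n"] x by simp
qed

end

section \<open>Free times\<close>

locale free_times = feedback_problem +
  fixes \<tau> :: int and z :: "real vec"
  assumes z: "z \<in> carrier_vec n"
begin

definition drift :: "nat \<Rightarrow> real vec" where
  "drift m = free_traj \<tau> z m"

definition impulse_at :: "nat \<Rightarrow> nat \<Rightarrow> real vec" where
  "impulse_at m i = impulse_resp (\<tau> + int i) (m - i - 1)"

text \<open>Times are counted from \<open>\<tau>\<close>.\<close>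
primrec free_before :: "nat \<Rightarrow> nat set" where
  "free_before 0 = {}"
| "free_before (Suc i) =
     (if cvec (\<tau> + int i) \<bullet> drift i \<noteq> 0 \<or> (\<exists>j\<in>free_before i. cvec (\<tau> + int i) \<bullet> impulse_at i j \<noteq> 0)
      then insert i (free_before i) else free_before i)"

definition free_time :: "nat \<Rightarrow> bool" where
  "free_time i \<longleftrightarrow> i \<in> free_before (Suc i)"

definition input_span :: "nat \<Rightarrow> real vec set" where
  "input_span m = lin_span n (impulse_at m) (free_before m)"

definition state_span :: "nat \<Rightarrow> real vec set" where
  "state_span m = {\<theta> \<cdot>\<^sub>v drift m + x | \<theta> x. x \<in> input_span m}"

definition input_rank :: "nat \<Rightarrow> nat" where
  "input_rank m = span_dim n (input_span m)"

definition state_rank :: "nat \<Rightarrow> nat" where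
  "state_rank m = span_dim n (state_span m)"

definition free_window :: "nat \<Rightarrow> nat set" where
  "free_window l = {i. l \<le> i \<and> i < l + n \<and> free_time i}"

definition admissible :: "(int \<Rightarrow> real) \<Rightarrow> bool" where
  "admissible u \<longleftrightarrow> (\<forall>i. \<not> free_time i \<longrightarrow> u (\<tau> + int i) = 0)"

definition output_at :: "nat \<Rightarrow> (int \<Rightarrow> real) \<Rightarrow> real" where
  "output_at j u = cvec (\<tau> + int j) \<bullet> traj A b u \<tau> z j"

lemma drift_carrier [simp]: "drift m \<in> carrier_vec n"
  using z by (simp add: drift_def)

lemma dim_drift [simp]: "dim_vec (drift m) = n"
  using drift_carrier by (metis carrier_vecD)

lemma impulse_at_carrier [simp]: "impulse_at m i \<in> carrier_vec n"
  by (simp add: impulse_at_def)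

lemma free_before_subset: "free_before i \<subseteq> {..<i}"
  by (induction i) auto

lemma finite_free_before [simp]: "finite (free_before i)"
  using free_before_subset finite_subset by blast

lemma free_time_iff_free_before:
  "free_time i \<longleftrightarrow>
     cvec (\<tau> + int i) \<bullet> drift i \<noteq> 0 \<or> (\<exists>j\<in>free_before i. cvec (\<tau> + int i) \<bullet> impulse_at i j \<noteq> 0)"
  using free_before_subset[of i] by (auto simp: free_time_def)

lemma free_before_eq: "free_before i = {j. j < i \<and> free_time j}"
proof (induction i)
  case (Suc i)
  then show ?case using free_time_iff_free_before[of i] by (auto simp: less_Suc_eq)
qed simp

lemma free_time_iff:
  "free_time i \<longleftrightarrow>
     cvec (\<tau> + int i) \<bullet> drift i \<noteq> 0 \<or> (\<exists>j<i. free_time j \<and> cvec (\<tau> + int i) \<bullet> impulse_at i j \<noteq> 0)"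
  unfolding free_time_iff_free_before[of i] free_before_eq[of i] by auto

lemma lin_subspace_input_span: "lin_subspace n (input_span m)"
  unfolding input_span_def by (rule lin_subspace_lin_span)

lemma input_span_carrier [simp]: "x \<in> input_span m \<Longrightarrow> x \<in> carrier_vec n"
  using lin_subspace_input_span by (rule lin_subspace_carrier)

lemma dim_input_span [simp]: "x \<in> input_span m \<Longrightarrow> dim_vec x = n"
  using input_span_carrier by (metis carrier_vecD)

lemma impulse_at_in_input_span: "i \<in> free_before m \<Longrightarrow> impulse_at m i \<in> input_span m"
  unfolding input_span_def by (rule lin_span_gen) auto

lemma lin_subspace_state_span: "lin_subspace n (state_span m)"
  unfolding lin_subspace_def
proof (intro conjI ballI allI subsetI)
  have S: "lin_subspace n (input_span m)" by (rule lin_subspace_input_span)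
  show "x \<in> carrier_vec n" if "x \<in> state_span m" for x
    using that by (auto simp: state_span_def)
  have "0\<^sub>v n = 0 \<cdot>\<^sub>v drift m + 0\<^sub>v n" by (intro eq_vecI) auto
  then show "0\<^sub>v n \<in> state_span m" using S unfolding state_span_def lin_subspace_def by blast
  show "x + y \<in> state_span m" if xy: "x \<in> state_span m" "y \<in> state_span m" for x y
  proof -
    obtain \<theta> u \<eta> v where "x = \<theta> \<cdot>\<^sub>v drift m + u" "y = \<eta> \<cdot>\<^sub>v drift m + v"
      and uv: "u \<in> input_span m" "v \<in> input_span m"
      using xy by (auto simp: state_span_def)
    then have "x + y = (\<theta> + \<eta>) \<cdot>\<^sub>v drift m + (u + v)"
      by (intro eq_vecI) (auto simp: algebra_simps)
    moreover have "u + v \<in> input_span m" using S uv by (simp add: lin_subspace_def)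
    ultimately show ?thesis unfolding state_span_def by blast
  qed
  show "a \<cdot>\<^sub>v x \<in> state_span m" if x: "x \<in> state_span m" for a x
  proof -
    obtain \<theta> u where "x = \<theta> \<cdot>\<^sub>v drift m + u" and u: "u \<in> input_span m"
      using x by (auto simp: state_span_def)
    then have "a \<cdot>\<^sub>v x = (a * \<theta>) \<cdot>\<^sub>v drift m + a \<cdot>\<^sub>v u"
      by (intro eq_vecI) (auto simp: algebra_simps)
    moreover have "a \<cdot>\<^sub>v u \<in> input_span m" using S u by (simp add: lin_subspace_def)
    ultimately show ?thesis unfolding state_span_def by blast
  qed
qed

lemma input_span_subset_state_span: "input_span m \<subseteq> state_span m"
proof
  fix x assume x: "x \<in> input_span m"
  then have "x = 0 \<cdot>\<^sub>v drift m + x" by (intro eq_vecI) auto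
  then show "x \<in> state_span m" using x unfolding state_span_def by blast
qed

lemma drift_in_state_span: "drift m \<in> state_span m"
proof -
  have "0\<^sub>v n \<in> input_span m" using lin_subspace_input_span by (simp add: lin_subspace_def)
  moreover have "drift m = 1 \<cdot>\<^sub>v drift m + 0\<^sub>v n" by (intro eq_vecI) auto
  ultimately show ?thesis unfolding state_span_def by blast
qed

lemma A_impulse_at: "i < m \<Longrightarrow> A (\<tau> + int m) *\<^sub>v impulse_at m i = impulse_at (Suc m) i"
  unfolding impulse_at_def using A_impulse_resp[of i m \<tau>] by simp

lemma impulse_at_last: "impulse_at (Suc m) m = bvec (\<tau> + int m)"
  by (simp add: impulse_at_def)

lemma A_drift: "A (\<tau> + int m) *\<^sub>v drift m = drift (Suc m)"
  by (simp add: drift_def)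

lemma A_input_span: "x \<in> input_span m \<Longrightarrow> A (\<tau> + int m) *\<^sub>v x \<in> input_span (Suc m)"
proof -
  assume "x \<in> input_span m"
  then obtain d where x: "x = lin_comb n (impulse_at m) d (free_before m)"
    by (auto simp: input_span_def elim: lin_spanE)
  have "A (\<tau> + int m) *\<^sub>v x = lin_comb n (\<lambda>i. A (\<tau> + int m) *\<^sub>v impulse_at m i) d (free_before m)"
    unfolding x by (rule lin_comb_mult) auto
  also have "\<dots> = lin_comb n (impulse_at (Suc m)) d (free_before m)"
  proof (rule lin_comb_cong)
    fix i r assume "i \<in> free_before m"
    then have "i < m" using free_before_subset by auto
    then show "(A (\<tau> + int m) *\<^sub>v impulse_at m i) $ r = impulse_at (Suc m) i $ r"
      by (simp only: A_impulse_at)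
  qed simp
  also have "\<dots> \<in> lin_span n (impulse_at (Suc m)) (free_before m)" by (rule lin_spanI) (rule refl)
  also have "\<dots> \<subseteq> lin_span n (impulse_at (Suc m)) (free_before (Suc m))"
    by (rule lin_span_mono) (auto simp: free_before_eq)
  finally show ?thesis unfolding input_span_def .
qed

lemma A_state_span: "x \<in> state_span m \<Longrightarrow> A (\<tau> + int m) *\<^sub>v x \<in> state_span (Suc m)"
proof -
  assume "x \<in> state_span m"
  then obtain \<theta> u where x: "x = \<theta> \<cdot>\<^sub>v drift m + u" and u: "u \<in> input_span m"
    by (auto simp: state_span_def)
  have "A (\<tau> + int m) *\<^sub>v x = \<theta> \<cdot>\<^sub>v drift (Suc m) + A (\<tau> + int m) *\<^sub>v u"
    unfolding x using u
      by (simp add: mult_add_distrib_mat_vec[OF dim_A] mult_mat_vec[OF dim_A] A_drift)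
  then show ?thesis using A_input_span[OF u] unfolding state_span_def by blast
qed

lemma bvec_in_input_span: "free_time m \<Longrightarrow> bvec (\<tau> + int m) \<in> input_span (Suc m)"
  using impulse_at_in_input_span[of m "Suc m"] by (simp add: impulse_at_last free_before_eq)

lemma cvec_state_span_not_free:
  assumes nf: "\<not> free_time m" and x: "x \<in> state_span m"
  shows "cvec (\<tau> + int m) \<bullet> x = 0"
proof -
  obtain \<theta> u where x: "x = \<theta> \<cdot>\<^sub>v drift m + u" and u: "u \<in> input_span m"
    using x by (auto simp: state_span_def)
  obtain d where u_eq: "u = lin_comb n (impulse_at m) d (free_before m)"
    using u by (auto simp: input_span_def elim: lin_spanE)
  have "cvec (\<tau> + int m) \<bullet> u = (\<Sum>i\<in>free_before m. d i * (cvec (\<tau> + int m) \<bullet> impulse_at m i))"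
    unfolding u_eq by (rule linear_functional_lin_comb[OF linear_functional_scalar_prod]) auto
  also have "\<dots> = 0" using nf free_time_iff_free_before[of m] by (intro sum.neutral) auto
  finally show ?thesis
    using nf free_time_iff_free_before[of m] u unfolding x
    by (simp add: scalar_prod_add_distrib[of _ n] scalar_prod_smult_distrib[of _ n])
qed

lemma free_traj_state_span: "x \<in> state_span l \<Longrightarrow> free_traj (\<tau> + int l) x i \<in> state_span (l + i)"
proof (induction i)
  case (Suc i)
  then show ?case using A_state_span[OF Suc.IH[OF Suc.prems]] by (simp add: add.assoc)
qed simp

lemma window_impulses_indep: "lin_indep n (impulse_at (l + n)) (free_window l)"
proof -
  have "lin_indep n (\<lambda>j. impulse_resp (\<tau> + int l + int j) (n - j - 1)) {j. j < n \<and> free_time (l + j)}"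
    by (rule lin_indep_subset[OF impulse_resps_indep]) auto
  then have "lin_indep n (\<lambda>j. impulse_at (l + n) (l + j)) {j. j < n \<and> free_time (l + j)}"
    by (simp add: impulse_at_def add.assoc)
  then have "lin_indep n (impulse_at (l + n)) ((\<lambda>j. l + j) ` {j. j < n \<and> free_time (l + j)})"
    by (rule lin_indep_reindex[rotated]) simp
  moreover have "(\<lambda>j. l + j) ` {j. j < n \<and> free_time (l + j)} = free_window l"
  proof (intro equalityI subsetI)
    fix x assume "x \<in> free_window l"
    then show "x \<in> (\<lambda>j. l + j) ` {j. j < n \<and> free_time (l + j)}"
      by (intro image_eqI[of _ _ "x - l"]) (auto simp: free_window_def)
  qed (auto simp: free_window_def)
  ultimately show ?thesis by simp
qed

lemma window_impulses_in_input_span: "impulse_at (l + n) ` free_window l \<subseteq> input_span (l + n)"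
  by (auto simp: free_window_def free_before_eq intro: impulse_at_in_input_span)

lemma card_free_window_le_input_rank: "card (free_window l) \<le> input_rank (l + n)"
  unfolding input_rank_def
  by (rule span_dim_ge[OF window_impulses_indep window_impulses_in_input_span])

text \<open>By observability, a state in \<open>state_span l\<close> is determined by the outputs of its free
  evolution over the next \<open>n\<close> steps, and only those at free times can be non-zero.\<close>
lemma state_rank_le_card_free_window: "state_rank l \<le> card (free_window l)"
  unfolding state_rank_def
proof (rule span_dim_le_functionals)
  show "finite (free_window l)" by (simp add: free_window_def)
  show "linear_functional n (\<lambda>x. cvec (\<tau> + int j) \<bullet> free_traj (\<tau> + int l) x (j - l))" for j
    by (rule linear_functional_free_traj) simp
  show "lin_subspace n (state_span l)" by (rule lin_subspace_state_span)
  fix x assume x: "x \<in> state_span l"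
    and zero: "\<forall>j\<in>free_window l. cvec (\<tau> + int j) \<bullet> free_traj (\<tau> + int l) x (j - l) = 0"
  have "cvec (\<tau> + int l + int i) \<bullet> free_traj (\<tau> + int l) x i = 0" if i: "i < n" for i
  proof (cases "free_time (l + i)")
    case True
    then have "l + i \<in> free_window l" using i by (simp add: free_window_def)
    then have "cvec (\<tau> + int (l + i)) \<bullet> free_traj (\<tau> + int l) x (l + i - l) = 0" using zero by blast
    then show ?thesis by (simp add: add.assoc)
  next
    case False
    show ?thesis using cvec_state_span_not_free[OF False free_traj_state_span[OF x]]
      by (simp add: add.assoc)
  qed
  then show "x = 0\<^sub>v n"
    using observable_free_traj[of x] x lin_subspace_state_span lin_subspace_carrier by blast
qed

lemma input_rank_le_state_rank: "input_rank m \<le> state_rank m"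
  unfolding input_rank_def state_rank_def by (rule span_dim_mono[OF input_span_subset_state_span])

lemma state_rank_le: "state_rank m \<le> n"
  unfolding state_rank_def by (rule span_dim_le)

lemma card_le_input_rank_Suc:
  assumes ind: "lin_indep n f I" and fI: "f ` I \<subseteq> input_span m"
    and w: "adj_b (\<tau> + int m) \<notin> lin_span n f I"
  shows "card I + (if free_time m then 1 else 0) \<le> input_rank (Suc m)"
proof -
  let ?t = "\<tau> + int m"
  let ?g = "\<lambda>i. A ?t *\<^sub>v f i"
  have g: "lin_indep n ?g I" and b: "bvec ?t \<notin> lin_span n ?g I"
    using lin_indep_mult_adj_mat[OF dim_A[of ?t] bvec_carrier[of ?t] ind] w
      by (auto simp: adj_b_def)
  have gI: "?g ` I \<subseteq> input_span (Suc m)" using fI A_input_span by auto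
  show ?thesis
  proof (cases "free_time m")
    case False
    then show ?thesis using span_dim_ge[OF g gI] by (simp add: input_rank_def)
  next
    case True
    have fin: "finite I" using ind by (rule lin_indep_finite)
    obtain k :: nat where k: "k \<notin> I" using ex_new_if_finite[OF infinite_UNIV_nat fin] by auto
    have "lin_indep n (?g(k := bvec ?t)) (insert k I)"
      by (rule lin_indep_insert[OF g k bvec_carrier b])
    moreover have "(?g(k := bvec ?t)) ` insert k I \<subseteq> input_span (Suc m)"
      using gI bvec_in_input_span[OF True] k by auto
    ultimately have "card (insert k I) \<le> input_rank (Suc m)" unfolding input_rank_def
      by (rule span_dim_ge)
    then show ?thesis using True fin k by simp
  qed
qed

text \<open>If \<open>adj A b\<close> already lies in the input span, it can be exchanged against a basis vector, and
  the remaining basis vectors together with \<open>b\<close> still show that the rank does not drop.\<close>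
lemma input_rank_Suc:
  "input_rank m + (if free_time m \<and> adj_b (\<tau> + int m) \<notin> input_span m then 1 else 0)
     \<le> input_rank (Suc m)"
proof -
  obtain f I where ind: "lin_indep n f I" and fI: "f ` I \<subseteq> input_span m"
    and card: "card I = input_rank m"
    unfolding input_rank_def by (rule span_dim_attained)
  have fin: "finite I" using ind by (rule lin_indep_finite)
  have span: "input_span m \<subseteq> lin_span n f I"
    by (rule lin_span_max_indep[OF _ ind fI]) (auto simp: card input_rank_def)
  show ?thesis
  proof (cases "adj_b (\<tau> + int m) \<in> input_span m")
    case False
    then have "adj_b (\<tau> + int m) \<notin> lin_span n f I"
      using lin_span_subset[OF lin_subspace_input_span fin fI] by auto
    then show ?thesis using card_le_input_rank_Suc[OF ind fI] card False by simp
  next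
    case True
    have free: "free_time m"
      using cvec_state_span_not_free[of m "adj_b (\<tau> + int m)"] True input_span_subset_state_span
        cvec_adj_b by blast
    obtain \<alpha> where \<alpha>: "adj_b (\<tau> + int m) = lin_comb n f \<alpha> I" using True span
      by (auto elim: lin_spanE)
    have "\<exists>k\<in>I. \<alpha> k \<noteq> 0"
    proof (rule ccontr)
      assume "\<not> (\<exists>k\<in>I. \<alpha> k \<noteq> 0)"
      then have "adj_b (\<tau> + int m) = 0\<^sub>v n" unfolding \<alpha> by (intro eq_vecI) auto
      then show False using cvec_adj_b[of "\<tau> + int m"] by simp
    qed
    then obtain k where k: "k \<in> I" "\<alpha> k \<noteq> 0" by blast
    have "adj_b (\<tau> + int m) \<notin> lin_span n f (I - {k})"
      unfolding \<alpha> by (rule lin_comb_notin_span_remove[where \<alpha> = \<alpha>, OF ind k])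
    moreover have "lin_indep n f (I - {k})" by (rule lin_indep_subset[OF ind]) auto
    ultimately have "card (I - {k}) + (if free_time m then 1 else 0) \<le> input_rank (Suc m)"
      using card_le_input_rank_Suc fI by blast
    then show ?thesis using card fin k free True by (simp add: card_Diff_singleton)
  qed
qed

lemma input_rank_mono: "i \<le> j \<Longrightarrow> input_rank i \<le> input_rank j"
proof -
  have "input_rank m \<le> input_rank (Suc m)" for m using input_rank_Suc[of m]
    by (simp split: if_splits)
  then show "i \<le> j \<Longrightarrow> input_rank i \<le> input_rank j" by (rule lift_Suc_mono_le)
qed

lemma state_rank_le_input_rank_shift: "state_rank l \<le> input_rank (l + n)"
  using state_rank_le_card_free_window card_free_window_le_input_rank by (rule le_trans)

text \<open>The quantity \<open>input_rank (k n) + state_rank (k n) \<le> 2 n\<close> increases with \<open>k\<close> as long as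
  the window \<open>[k n, k n + n)\<close> is not stable.\<close>
lemma stable_window_exists:
  "\<exists>k \<le> 2 * n. input_rank (k * n) = state_rank (k * n) \<and>
     input_rank (k * n + n) = state_rank (k * n)"
proof (rule ccontr)
  assume unstable: "\<not> ?thesis"
  define \<pi> where "\<pi> k = input_rank (k * n) + state_rank (k * n)" for k
  have step: "\<pi> k + 1 \<le> \<pi> (Suc k)" if k: "k \<le> 2 * n" for k
  proof -
    have "state_rank (k * n) \<le> input_rank (Suc k * n)"
      using state_rank_le_input_rank_shift[of "k * n"] by (simp add: add.commute)
    moreover have "input_rank (k * n) \<le> state_rank (k * n)"
      and "input_rank (Suc k * n) \<le> state_rank (Suc k * n)"
      by (rule input_rank_le_state_rank)+
    moreover have
      "\<not> (input_rank (k * n) = state_rank (k * n) \<and> input_rank (Suc k * n) = state_rank (k * n))"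
      using unstable k by (simp add: add.commute)
    ultimately show ?thesis unfolding \<pi>_def by linarith
  qed
  have grow: "k \<le> \<pi> k" if "k \<le> 2 * n + 1" for k
    using that
  proof (induction k)
    case (Suc k)
    then show ?case using step[of k] by simp
  qed simp
  have "\<pi> (2 * n + 1) \<le> 2 * n" unfolding \<pi>_def
    using input_rank_le_state_rank[of "(2 * n + 1) * n"] state_rank_le[of "(2 * n + 1) * n"] by simp
  then show False using grow[of "2 * n + 1"] by simp
qed

lemma traj_drift: "traj A b u \<tau> z m = drift m + lin_comb n (impulse_at m) (\<lambda>i. u (\<tau> + int i)) {..<m}"
  unfolding drift_def impulse_at_def by (rule traj_superposition[OF z])

lemma admissible_lin_comb_in_input_span:
  assumes "admissible u" and "j \<le> m"
  shows "lin_comb n (impulse_at m) (\<lambda>i. u (\<tau> + int i)) {..<j} \<in> input_span m"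
proof -
  have "lin_comb n (impulse_at m) (\<lambda>i. u (\<tau> + int i)) {..<j}
      = lin_comb n (impulse_at m) (\<lambda>i. u (\<tau> + int i)) ({..<j} \<inter> free_before m)"
    by (rule lin_comb_mono_neutral) (use assms in \<open>auto simp: admissible_def free_before_eq\<close>)
  also have "\<dots> \<in> input_span m"
    by (rule lin_subspace_lin_comb[OF lin_subspace_input_span]) (auto intro: impulse_at_in_input_span)
  finally show ?thesis .
qed

lemma admissible_output_nonzero:
  assumes "free_time j"
  obtains u where "admissible u" and "output_at j u \<noteq> 0"
proof (cases "cvec (\<tau> + int j) \<bullet> drift j = 0")
  case True
  then obtain i where i: "i < j" "free_time i" "cvec (\<tau> + int j) \<bullet> impulse_at j i \<noteq> 0"
    using assms free_time_iff[of j] by auto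
  define u :: "int \<Rightarrow> real" where "u s = (if s = \<tau> + int i then 1 else 0)" for s
  have "admissible u" using i(2) by (auto simp: admissible_def u_def)
  moreover have "traj A b u \<tau> z j = drift j + impulse_at j i"
  proof -
    have "lin_comb n (impulse_at j) (\<lambda>k. u (\<tau> + int k)) {..<j} = 1 \<cdot>\<^sub>v impulse_at j i"
      unfolding u_def
        by (subst lin_comb_single[symmetric, of "{..<j}" i]) (use i in \<open>auto intro: lin_comb_cong\<close>)
    then show ?thesis by (simp add: traj_drift)
  qed
  then have "output_at j u \<noteq> 0"
    using True i(3) by (simp add: output_at_def scalar_prod_add_distrib[of _ n])
  ultimately show ?thesis by (rule that)
next
  case False
  have "admissible (\<lambda>_. 0)" by (simp add: admissible_def)
  moreover have "output_at j (\<lambda>_. 0) \<noteq> 0" using False z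
    by (simp add: output_at_def traj_zero_input drift_def)
  ultimately show ?thesis by (rule that)
qed

lemma output_at_affine:
  "output_at j (\<lambda>s. u s + t * (q s - u s)) = output_at j u + t * (output_at j q - output_at j u)"
  unfolding output_at_def traj_affine[OF z] using z
  by (simp add: scalar_prod_add_distrib[of _ n] scalar_prod_minus_distrib[of _ n]
      scalar_prod_smult_distrib[of _ n] algebra_simps)

end

section \<open>Stable windows\<close>

locale stable_window = free_times +
  fixes S :: nat
  assumes stable: "input_rank S = state_rank S" "input_rank (S + n) = state_rank S"
begin

lemma drift_in_input_span: "S \<le> m \<Longrightarrow> drift m \<in> input_span m"
proof -
  have "state_span S \<subseteq> input_span S"
    by (rule span_dim_le_imp_subset[OF lin_subspace_input_span _ input_span_subset_state_span])
      (use stable lin_subspace_state_span in \<open>auto simp: input_rank_def state_rank_def lin_subspace_def\<close>)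
  then have "drift (S + d) \<in> input_span (S + d)" for d
  proof (induction d)
    case (Suc d)
    then show ?case using A_input_span[of "drift (S + d)" "S + d"]
      by (simp only: A_drift add_Suc_right)
  qed (use drift_in_state_span in auto)
  then show "S \<le> m \<Longrightarrow> drift m \<in> input_span m" by (metis le_add_diff_inverse)
qed

lemma input_span_window: "input_span (S + n) \<subseteq> lin_span n (impulse_at (S + n)) (free_window S)"
  by (rule lin_span_max_indep[OF _ window_impulses_indep window_impulses_in_input_span])
    (use state_rank_le_card_free_window[of S] stable in \<open>auto simp: input_rank_def\<close>)

lemma adj_b_in_input_span:
  assumes "S \<le> j" "j < S + n" "free_time j"
  shows "adj_b (\<tau> + int j) \<in> input_span j"
proof (rule ccontr)
  assume "adj_b (\<tau> + int j) \<notin> input_span j"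
  then have "input_rank j + 1 \<le> input_rank (Suc j)" using input_rank_Suc[of j] assms(3) by simp
  moreover have "input_rank S \<le> input_rank j" "input_rank (Suc j) \<le> input_rank (S + n)"
    using assms by (auto intro: input_rank_mono)
  ultimately show False using stable by simp
qed

text \<open>Every admissible input prefix of length \<open>j \<le> S\<close> extends to an admissible input reaching \<open>0\<close>
  at \<open>S + n\<close>: the state it leads to at \<open>S + n\<close> (without further input) lies in the input span,
  which the free times of the window already span.\<close>
lemma admissible_completion:
  assumes adm: "admissible u" and j: "j \<le> S"
  obtains q where "admissible q" and "\<And>i. i < j \<Longrightarrow> q (\<tau> + int i) = u (\<tau> + int i)"
    and "traj A b q \<tau> z (S + n) = 0\<^sub>v n"
proof -
  define T where "T = S + n"
  define X where "X = drift T + lin_comb n (impulse_at T) (\<lambda>i. u (\<tau> + int i)) {..<j}"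
  have "X \<in> input_span T"
    using drift_in_input_span[of T] admissible_lin_comb_in_input_span[OF adm, of j T] j
      lin_subspace_input_span[of T] by (auto simp: X_def T_def lin_subspace_def)
  then obtain \<gamma> where X: "X = lin_comb n (impulse_at T) \<gamma> (free_window S)"
    using input_span_window unfolding T_def by (auto elim: lin_spanE)
  define q where "q s = (if s < \<tau> + int j then u s
      else if s \<in> (\<lambda>i. \<tau> + int i) ` free_window S then - \<gamma> (nat (s - \<tau>)) else 0)" for s
  have q: "q (\<tau> + int i) =
      (if i < j then u (\<tau> + int i) else if i \<in> free_window S then - \<gamma> i else 0)" for i
    by (auto simp: q_def)
  have window: "j \<le> i \<and> i < T \<and> free_time i" if "i \<in> free_window S" for i
    using that j by (auto simp: free_window_def T_def)
  have "admissible q" using adm by (auto simp: admissible_def q dest: window)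
  moreover have "lin_comb n (impulse_at T) (\<lambda>i. q (\<tau> + int i)) {..<T}
      = lin_comb n (impulse_at T) (\<lambda>i. u (\<tau> + int i)) {..<j} - X"
  proof -
    have split: "{..<T} = {..<j} \<union> {j..<T}" using j by (auto simp: T_def)
    have "lin_comb n (impulse_at T) (\<lambda>i. q (\<tau> + int i)) {..<T}
        = lin_comb n (impulse_at T) (\<lambda>i. q (\<tau> + int i)) {..<j}
          + lin_comb n (impulse_at T) (\<lambda>i. q (\<tau> + int i)) {j..<T}"
      unfolding split by (rule lin_comb_union) auto
    also have "lin_comb n (impulse_at T) (\<lambda>i. q (\<tau> + int i)) {j..<T}
        = lin_comb n (impulse_at T) (\<lambda>i. q (\<tau> + int i)) (free_window S)"
      by (rule lin_comb_mono_neutral) (auto simp: q dest: window)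
    also have "\<dots> = lin_comb n (impulse_at T) (\<lambda>i. - \<gamma> i) (free_window S)"
      by (rule lin_comb_cong) (auto simp: q dest: window)
    also have "lin_comb n (impulse_at T) (\<lambda>i. q (\<tau> + int i)) {..<j}
        = lin_comb n (impulse_at T) (\<lambda>i. u (\<tau> + int i)) {..<j}"
      by (rule lin_comb_cong) (auto simp: q)
    finally show ?thesis unfolding X by (intro eq_vecI) (auto simp: sum_negf)
  qed
  then have "traj A b q \<tau> z (S + n) = 0\<^sub>v n"
    unfolding traj_drift T_def[symmetric] X_def by (intro eq_vecI) auto
  ultimately show ?thesis using that by (simp add: q)
qed

lemma output_nonzero_before_window:
  assumes "j < S" and "free_time j"
  shows "\<exists>q. admissible q \<and> traj A b q \<tau> z (S + n) = 0\<^sub>v n \<and> output_at j q \<noteq> 0"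
proof -
  obtain u where u: "admissible u" "output_at j u \<noteq> 0"
    using admissible_output_nonzero[OF assms(2)] by blast
  obtain q where q: "admissible q" "\<And>i. i < j \<Longrightarrow> q (\<tau> + int i) = u (\<tau> + int i)"
    "traj A b q \<tau> z (S + n) = 0\<^sub>v n"
    using admissible_completion[OF u(1), of j] assms(1) by auto
  have "output_at j q = output_at j u" unfolding output_at_def using q(2) by (simp cong: traj_cong)
  then show ?thesis using q u by auto
qed

text \<open>At a free time \<open>j\<close> of the window the state can be steered to \<open>adj A b\<close>, whose output is
  non-zero, and then to \<open>A adj A b - det A b = 0\<close> in one step.\<close>
lemma output_nonzero_in_window:
  assumes j: "S \<le> j" "j < S + n" and free: "free_time j"
  shows "\<exists>q. admissible q \<and> traj A b q \<tau> z (S + n) = 0\<^sub>v n \<and> output_at j q \<noteq> 0"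
proof -
  define t where "t = \<tau> + int j"
  have "adj_b t - drift j \<in> input_span j"
    using adj_b_in_input_span[OF j free] drift_in_input_span[of j] j lin_subspace_input_span
    unfolding t_def by (auto intro: lin_subspace_diff)
  then obtain \<gamma> where \<gamma>: "adj_b t - drift j = lin_comb n (impulse_at j) \<gamma> (free_before j)"
    unfolding input_span_def by (auto elim: lin_spanE)
  define q where "q s = (if s < t then (if \<tau> \<le> s \<and> nat (s - \<tau>) \<in> free_before j
      then \<gamma> (nat (s - \<tau>)) else 0) else if s = t then - det (A t) else 0)" for s
  have q: "q (\<tau> + int i) = (if i < j then (if i \<in> free_before j then \<gamma> i else 0)
      else if i = j then - det (A t) else 0)" for i
    by (simp add: q_def t_def)
  have "admissible q" using free by (auto simp: admissible_def q free_before_eq)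
  moreover have tj: "traj A b q \<tau> z j = adj_b t"
  proof -
    have "lin_comb n (impulse_at j) (\<lambda>i. q (\<tau> + int i)) {..<j}
        = lin_comb n (impulse_at j) (\<lambda>i. q (\<tau> + int i)) (free_before j)"
      by (rule lin_comb_mono_neutral) (use free_before_subset[of j] in \<open>auto simp: q\<close>)
    also have "\<dots> = adj_b t - drift j"
      unfolding \<gamma> by (rule lin_comb_cong) (use free_before_subset[of j] in \<open>auto simp: q\<close>)
    finally show ?thesis by (simp add: traj_drift) (intro eq_vecI; simp)
  qed
  moreover have "traj A b q \<tau> z (S + n) = 0\<^sub>v n"
  proof (rule traj_stays_zero)
    show "traj A b q \<tau> z (Suc j) = 0\<^sub>v n"
      using tj A_adj_b[of t]
        by (simp add: traj_Suc_bvec q t_def del: traj.simps) (intro eq_vecI; simp)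
  qed (use j in \<open>auto simp: q\<close>)
  moreover have "output_at j q \<noteq> 0" using tj cvec_adj_b[of t] by (simp add: output_at_def t_def)
  ultimately show ?thesis by blast
qed

text \<open>Admissible inputs reaching \<open>0\<close> at \<open>S + n\<close> form an affine set, on which the output at
  each free time is an affine function that is not identically zero.\<close>
lemma killing_input_with_nonzero_outputs:
  obtains u where "admissible u" and "traj A b u \<tau> z (S + n) = 0\<^sub>v n"
    and "\<And>j. j < S + n \<Longrightarrow> free_time j \<Longrightarrow> output_at j u \<noteq> 0"
proof -
  define P where "P = {u. admissible u \<and> traj A b u \<tau> z (S + n) = 0\<^sub>v n}"
  define J where "J = {j. j < S + n \<and> free_time j}"
  have "admissible (\<lambda>_. 0)" by (simp add: admissible_def)
  then obtain u0 where u0: "u0 \<in> P" using admissible_completion[of "\<lambda>_. 0" 0] by (auto simp: P_def)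
  have affine: "(\<lambda>s. u s + t * (q s - u s)) \<in> P" if "u \<in> P" "q \<in> P" for u q t
  proof -
    have "admissible (\<lambda>s. u s + t * (q s - u s))" using that by (simp add: P_def admissible_def)
    moreover have "traj A b (\<lambda>s. u s + t * (q s - u s)) \<tau> z (S + n) = 0\<^sub>v n"
      using that by (simp add: P_def traj_affine[OF z]) (intro eq_vecI; simp)
    ultimately show ?thesis by (simp add: P_def)
  qed
  have witness: "\<exists>q\<in>P. output_at j q \<noteq> 0" if "j \<in> J" for j
    using that output_nonzero_before_window[of j] output_nonzero_in_window[of j]
    by (cases "j < S") (auto simp: P_def J_def)
  have "finite J" unfolding J_def by (rule finite_subset[of _ "{..<S + n}"]) auto
  then have "\<exists>u\<in>P. \<forall>j\<in>J. output_at j u \<noteq> 0"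
    by (rule affine_common_nonzero[OF _ u0 affine]) (simp_all add: output_at_affine witness)
  then obtain u where "u \<in> P" "\<forall>j\<in>J. output_at j u \<noteq> 0" by blast
  then show ?thesis using that by (auto simp: P_def J_def)
qed

lemma feedback_kills_in_window: "\<exists>F. cl_traj A b c F \<tau> z (S + n) = 0\<^sub>v n"
proof -
  obtain u where adm: "admissible u" and zero: "traj A b u \<tau> z (S + n) = 0\<^sub>v n"
    and nz: "\<And>j. j < S + n \<Longrightarrow> free_time j \<Longrightarrow> output_at j u \<noteq> 0"
    using killing_input_with_nonzero_outputs by blast
  have "cl_traj A b c (\<lambda>s. u s / (cvec s \<bullet> traj A b u \<tau> z (nat (s - \<tau>)))) \<tau> z (S + n)
      = traj A b u \<tau> z (S + n)"
    by (rule cl_traj_realizes_input[OF z])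
      (use adm nz in \<open>auto simp: admissible_def output_at_def\<close>)
  then show ?thesis using zero by auto
qed

end

context free_times
begin

lemma feedback_kills_start_state: "\<exists>F. cl_traj A b c F \<tau> z (2 * n * n + n) = 0\<^sub>v n"
proof -
  obtain k where k: "k \<le> 2 * n" "input_rank (k * n) = state_rank (k * n)"
    "input_rank (k * n + n) = state_rank (k * n)"
    using stable_window_exists by blast
  interpret stable_window n A b c \<tau> z "k * n" by unfold_locales (use k in auto)
  obtain F where "cl_traj A b c F \<tau> z (k * n + n) = 0\<^sub>v n" using feedback_kills_in_window by blast
  moreover have "k * n + n \<le> 2 * n * n + n" using k(1) by simp
  ultimately show ?thesis by (blast intro: cl_traj_stays_zero)
qed

end

context feedback_problem
begin

lemma feedback_kills_state:
  assumes "z \<in> carrier_vec n" and "2 * n * n + n \<le> N"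
  shows "\<exists>F. cl_traj A b c F t z N = 0\<^sub>v n"
proof -
  interpret free_times n A b c t z by unfold_locales (rule assms(1))
  show ?thesis using feedback_kills_start_state assms(2) by (blast intro: cl_traj_stays_zero)
qed

end

theorem theorem5:
  fixes n :: nat
    and A b c :: "int \<Rightarrow> real mat"
  assumes dimA: "\<And>k. A k \<in> carrier_mat n n"
    and dimb: "\<And>k. b k \<in> carrier_mat n 1"
    and dimc: "\<And>k. c k \<in> carrier_mat 1 n"
    and ctrb: "completely_controllable n A b"
    and obsv: "completely_observable n A b c"
    and adj: "\<And>k. (c k * adj_mat (A k) * b k) $$ (0, 0) \<noteq> 0"
  shows "\<exists>F :: int \<Rightarrow> real. \<forall>k. \<forall>xi \<in> carrier_vec n.
           cl_traj A b c F k xi (2 * (n^4 + n^3 + n^2)) = 0\<^sub>v n"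
proof -
  interpret feedback_problem n A b c by unfold_locales (fact assms)+
  txt \<open>Any per-state horizon \<open>N \<ge> 2 n\<^sup>2 + n\<close> works; this one gives the bound of the statement.\<close>
  define N where "N = n^3 + n^2 + n"
  have "n * n \<le> n * n * n" by (cases n) auto
  then have "2 * n * n + n \<le> N" by (simp add: N_def power2_eq_square power3_eq_cube)
  then have "\<exists>F. cl_traj A b c F t z N = 0\<^sub>v n" if "z \<in> carrier_vec n" for t z
    using feedback_kills_state that by blast
  then have "\<exists>F. \<forall>x\<in>carrier_vec n. cl_traj A b c F t0 x (n * N) = 0\<^sub>v n" for t0
    by (rule cl_traj_kills_all_states)
  then have "\<exists>F. \<forall>k. \<forall>x\<in>carrier_vec n. cl_traj A b c F k x (2 * (n * N)) = 0\<^sub>v n"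
    by (rule cl_traj_kills_from_all_times)
  moreover have "n * N = n^4 + n^3 + n^2" by (simp add: N_def eval_nat_numeral algebra_simps)
  ultimately show ?thesis by simp
qed

end
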